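(* Let $p(\cdot)\in\mathcal P^{\log}_\pm(\mathbb B)$ and $w\in B^+_{p(\cdot)}$ with $w(\mathbb B)>0$. Then $w'\in B^+_{p'(\cdot)}$, and there is $C\ge1$ such that, for all $B\in\mathcal B$, the three quantities $$\Big(\frac{1}{\mu_\alpha(B)^{p'_B}}w'(B)\|w'^{-1}\chi_B\|_{p(\cdot)/p'(\cdot)}\Big)^{p_B-1},\quad \frac1{\mu_\alpha(B)^{p_B}}w(B)\|w^{-1}\chi_B\|_{p'(\cdot)/p(\cdot)},\quad \frac{w(B)}{\mu_\alpha(B)}\Big(\frac{w'(B)}{\mu_\alpha(B)}\Big)^{p_B-1}$$ are pairwise comparable up to the factor $C$.
   Context: $\mathbb B$ unit ball of $\mathbb C^n$, $\alpha>0$, $d\mu_\alpha(z)=(1-|z|^2)^{\alpha-1}d\mu(z)$. Pseudo-distance $d(z,\zeta)=\big||z|-|\zeta|\big|+\big|1-\frac{\langle z,\zeta\rangle}{|z||\zeta|}\big|$ ($z,\zeta\ne0$), $d(z,\zeta)=|z|+|\zeta|$ otherwise; pseudo-balls $B(z,r)=\{\zeta:d(z,\zeta)<r\}$; $\mathcal B$ = pseudo-balls $B(z,r)$ with $r>1-|z|$. $\mathcal P^{\log}_\pm(\mathbb B)$: measurable $p$ with $\operatorname{ess\,inf}p>1$ and $|p(z)-p(\zeta)|\le c/\ln(e+1/d(z,\zeta))$ for some $c$ and all $z\ne\zeta$; $1/p+1/p'=1$. For an exponent $r(\cdot)$ bounded and bounded away from $0$: $\|f\|_{r(\cdot)}=\inf\{\lambda>0:\int|f/\lambda|^{r(z)}d\mu_\alpha\le1\}$.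 Weights are non-negative locally integrable functions, $w(E)=\int_Ew\,d\mu_\alpha$, $w'=w^{1-p'(\cdot)}$. For an exponent $q$, $q_B=\big(\frac1{\mu_\alpha(B)}\int_B\frac1qd\mu_\alpha\big)^{-1}$ (so $p_B$, $p'_B$). For $q\in\mathcal P^{\log}_\pm(\mathbb B)$, $w\in B^+_{q(\cdot)}$ means $\sup_{B\in\mathcal B}\mu_\alpha(B)^{-q_B}w(B)\|w^{-1}\chi_B\|_{q'(\cdot)/q(\cdot)}<\infty$. *)

theory Defs
  imports "HOL-Analysis.Analysis"
begin

type_synonym 'n cvec = "complex ^ 'n"

definition unitB :: "('n::finite) cvec set" where
  "unitB = ball 0 1"

definition cinner :: "('n::finite) cvec \<Rightarrow> 'n cvec \<Rightarrow> complex" where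
  "cinner z w = (\<Sum>i\<in>UNIV. z $ i * cnj (w $ i))"

definition mu_alpha :: "real \<Rightarrow> ('n::finite) cvec measure" where
  "mu_alpha \<alpha> = density lborel
     (\<lambda>z::'n cvec. indicator unitB z * ennreal ((1 - (norm z)\<^sup>2) powr (\<alpha> - 1)) / emeasure lborel (unitB :: 'n cvec set))"

definition pdist :: "('n::finite) cvec \<Rightarrow> 'n cvec \<Rightarrow> real" where
  "pdist z w = (if z \<noteq> 0 \<and> w \<noteq> 0
      then \<bar>norm z - norm w\<bar> + cmod (1 - cinner z w / complex_of_real (norm z * norm w))
      else norm z + norm w)"

definition pball :: "('n::finite) cvec \<Rightarrow> real \<Rightarrow> 'n cvec set" where
  "pball z r = {w \<in> unitB. pdist z w < r}"

definition calB :: "('n::finite) cvec set set" where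
  "calB = {pball z r | z r. z \<in> unitB \<and> r > 1 - norm z}"

definition Plog :: "real \<Rightarrow> (('n::finite) cvec \<Rightarrow> real) \<Rightarrow> bool" where
  "Plog \<alpha> p \<longleftrightarrow> p \<in> borel_measurable borel \<and>
     (\<exists>\<delta>>1. AE z in mu_alpha \<alpha>. \<delta> \<le> p z) \<and>
     (\<exists>c. \<forall>z\<in>unitB. \<forall>w\<in>unitB. z \<noteq> w \<longrightarrow>
         \<bar>p z - p w\<bar> \<le> c / ln (exp 1 + 1 / pdist z w))"

definition conj_exp :: "('a \<Rightarrow> real) \<Rightarrow> 'a \<Rightarrow> real" where
  "conj_exp p z = p z / (p z - 1)"

definition epowr :: "ennreal \<Rightarrow> real \<Rightarrow> ennreal" where
  "epowr x s = (if s = 0 then 1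
     else if x = 0 then (if s < 0 then \<infinity> else 0)
     else if x = \<infinity> then (if s > 0 then \<infinity> else 0)
     else ennreal (enn2real x powr s))"

definition weight :: "real \<Rightarrow> (('n::finite) cvec \<Rightarrow> ennreal) \<Rightarrow> bool" where
  "weight \<alpha> w \<longleftrightarrow> w \<in> borel_measurable borel \<and>
     (\<forall>K. compact K \<and> K \<subseteq> unitB \<longrightarrow> (\<integral>\<^sup>+ z. w z * indicator K z \<partial>mu_alpha \<alpha>) < \<infinity>)"

definition wmeas :: "real \<Rightarrow> (('n::finite) cvec \<Rightarrow> ennreal) \<Rightarrow> 'n cvec set \<Rightarrow> ennreal" where
  "wmeas \<alpha> w E = (\<integral>\<^sup>+ z. w z * indicator E z \<partial>mu_alpha \<alpha>)"

definition dual_weight :: "(('n::finite) cvec \<Rightarrow> real) \<Rightarrow> ('n cvec \<Rightarrow> ennreal) \<Rightarrow> 'n cvec \<Rightarrow> ennreal" where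
  "dual_weight p w z = epowr (w z) (1 - conj_exp p z)"

text \<open>Luxemburg norm of variable exponent Lebesgue space w.r.t. mu_alpha (value \<infinity> if no lambda works).\<close>
definition vnorm :: "real \<Rightarrow> (('n::finite) cvec \<Rightarrow> real) \<Rightarrow> ('n cvec \<Rightarrow> ennreal) \<Rightarrow> ennreal" where
  "vnorm \<alpha> r f = Inf {ennreal t | t. t > 0 \<and>
      (\<integral>\<^sup>+ z. epowr (f z / ennreal t) (r z) \<partial>mu_alpha \<alpha>) \<le> 1}"

text \<open>q_B: harmonic mean of q over B w.r.t. mu_alpha.\<close>
definition avg_exp :: "real \<Rightarrow> (('n::finite) cvec \<Rightarrow> real) \<Rightarrow> 'n cvec set \<Rightarrow> real" where
  "avg_exp \<alpha> q B = 1 / ((1 / measure (mu_alpha \<alpha>) B) *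
      (\<integral>z. indicator B z * (1 / q z) \<partial>mu_alpha \<alpha>))"

definition Bchar :: "real \<Rightarrow> (('n::finite) cvec \<Rightarrow> real) \<Rightarrow> ('n cvec \<Rightarrow> ennreal) \<Rightarrow> 'n cvec set \<Rightarrow> ennreal" where
  "Bchar \<alpha> q w B = ennreal (measure (mu_alpha \<alpha>) B powr (- avg_exp \<alpha> q B)) * wmeas \<alpha> w B *
      vnorm \<alpha> (\<lambda>z. conj_exp q z / q z) (\<lambda>z. epowr (w z) (-1) * indicator B z)"

definition Bplus :: "real \<Rightarrow> (('n::finite) cvec \<Rightarrow> real) \<Rightarrow> ('n cvec \<Rightarrow> ennreal) \<Rightarrow> bool" where
  "Bplus \<alpha> q w \<longleftrightarrow> weight \<alpha> w \<and> (SUP B\<in>calB. Bchar \<alpha> q w B) < \<infinity>"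

end

theory Submission
  imports Defs
begin

text \<open>
  A pseudo-ball \<open>B = B(z, r)\<close> with \<open>r > 1 - |z|\<close> contains a Euclidean ball of radius
  \<open>min r 1 / 40\<close> at depth \<open>min r 1 / 4\<close> below the sphere, so \<open>\<mu>\<^sub>\<alpha>(B)\<close> is bounded below by a
  power of \<open>r\<close>, while the pseudo-diameter of \<open>B\<close> is \<open>O(\<surd>r)\<close>. Hence the log-Hoelder condition
  gives \<open>|p(x) - p(y)| \<cdot> |ln \<mu>\<^sub>\<alpha>(B)| = O(1)\<close> on \<open>B\<close>, and the same for \<open>|p\<^sub>B - p(x)|\<close>.

  Young's inequality \<open>1 \<le> w/A + K(A) w'\<close> on \<open>B\<close> bounds \<open>w(B)\<close> and \<open>w'(B)\<close> below by
  powers of \<open>\<mu>\<^sub>\<alpha>(B)\<close> (the \<open>B\<^sup>+\<close> condition on the whole ball makes \<open>w(\<bbbB>)\<close> and \<open>w'(\<bbbB>)\<close>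
  finite), so \<open>|ln w(B)|\<close> and \<open>|ln w'(B)|\<close> are \<open>O(1 + |ln \<mu>\<^sub>\<alpha>(B)|)\<close>. Therefore the variable
  exponent in the Luxemburg modulars of \<open>w\<^sup>-\<^sup>1\<chi>\<^sub>B\<close> and \<open>w'\<^sup>-\<^sup>1\<chi>\<^sub>B\<close> may be frozen at its
  average \<open>p\<^sub>B\<close> at the cost of a bounded factor:
  \<open>\<parallel>w\<^sup>-\<^sup>1\<chi>\<^sub>B\<parallel> \<approx> w'(B)^(p\<^sub>B - 1)\<close> and \<open>\<parallel>w'\<^sup>-\<^sup>1\<chi>\<^sub>B\<parallel> \<approx> w(B)^(1/(p\<^sub>B - 1))\<close>.
  Since \<open>(p')\<^sub>B = p\<^sub>B/(p\<^sub>B - 1)\<close>, all three quantities are then comparable to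
  \<open>\<mu>\<^sub>\<alpha>(B)^(-p\<^sub>B) w(B) w'(B)^(p\<^sub>B - 1)\<close>, and the \<open>B\<^sup>+\<close> bound for \<open>w\<close> transfers to \<open>w'\<close>.
\<close>

section \<open>Extended powers and elementary estimates\<close>

lemma epowr_ennreal: "0 < x \<Longrightarrow> epowr (ennreal x) s = ennreal (x powr s)"
  by (simp add: epowr_def)

lemma epowr_zero_pos: "s > 0 \<Longrightarrow> epowr 0 s = 0" by (simp add: epowr_def)

lemma epowr_zero_neg: "s < 0 \<Longrightarrow> epowr 0 s = top" by (simp add: epowr_def)

lemma epowr_top_pos: "s > 0 \<Longrightarrow> epowr top s = top" by (simp add: epowr_def)

lemma epowr_top_neg: "s < 0 \<Longrightarrow> epowr top s = 0" by (simp add: epowr_def)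

lemma epowr_1_left: "epowr 1 s = 1" using epowr_ennreal[of 1 s] by simp

lemma epowr_0_right: "epowr x 0 = 1" by (simp add: epowr_def)

lemma ennreal_zero_top_pos_cases: obtains "x = 0" | "x = top" | r where "r > 0" "x = ennreal r"
proof (cases x)
  case (real r) then show ?thesis using that by (cases "r = 0") auto
qed (use that in auto)

lemma epowr_1_right: "epowr x 1 = x"
  by (cases x rule: ennreal_zero_top_pos_cases) (auto simp: epowr_def)

lemma epowr_epowr: "epowr (epowr x a) b = epowr x (a * b)"
proof (cases x rule: ennreal_zero_top_pos_cases)
  case (3 r)
  then show ?thesis by (simp add: epowr_ennreal powr_powr)
qed (cases a "0::real" rule: linorder_cases; cases b "0::real" rule: linorder_cases;
     simp add: epowr_0_right epowr_zero_pos epowr_zero_neg epowr_top_pos epowr_top_neg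
       mult_neg_neg mult_pos_neg mult_neg_pos epowr_1_left)+

lemma epowr_indicator_divide:
  assumes "b > 0" "t > 0" "c = 0 \<or> c = 1"
  shows "epowr (y * c / ennreal t) b = c * epowr y b * ennreal (t powr (- b))"
proof (cases "c = 0")
  case True then show ?thesis using assms by (simp add: epowr_zero_pos)
next
  case False
  then have c: "c = 1" using assms by auto
  show ?thesis
  proof (cases y rule: ennreal_zero_top_pos_cases)
    case 1 then show ?thesis using assms c by (simp add: epowr_zero_pos)
  next
    case 2 then show ?thesis using assms c
      by (simp add: epowr_top_pos ennreal_top_divide ennreal_top_mult)
  next
    case (3 r)
    then have "y * c / ennreal t = ennreal (r / t)" using c assms by (simp add: divide_ennreal)
    then show ?thesis using 3 c assms
      by (simp add: epowr_ennreal ennreal_mult'' [symmetric] powr_divide powr_minus_divide)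
  qed
qed

lemma borel_measurable_epowr[measurable]:
  assumes [measurable]: "(f::'a \<Rightarrow> ennreal) \<in> borel_measurable M" "(s::'a \<Rightarrow> real) \<in> borel_measurable M"
  shows "(\<lambda>z. epowr (f z) (s z)) \<in> borel_measurable M"
  unfolding epowr_def by measurable

lemma ennreal_le_imp_real:
  assumes "x \<le> ennreal c" "c \<ge> 0"
  shows "x = ennreal (enn2real x)" "enn2real x \<le> c"
proof -
  have "x < \<infinity>" using assms(1) by (simp add: le_less_trans)
  then show "x = ennreal (enn2real x)" "enn2real x \<le> c" using assms by (cases x; simp add: ennreal_le_iff)+
qed

lemma ennreal_exp_close:
  assumes "\<bar>x - L\<bar> \<le> h" "\<bar>y - L\<bar> \<le> h"
  shows "ennreal (exp x) \<le> ennreal (exp (2 * h)) * ennreal (exp y)"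
proof -
  have "exp x \<le> exp (2 * h) * exp y"
    using assms by (simp add: abs_le_iff flip: exp_add)
  then show ?thesis by (simp add: ennreal_mult''[symmetric] ennreal_leI)
qed

lemma ennreal_term_le_suminf: "(f::nat \<Rightarrow> ennreal) k \<le> (\<Sum>i. f i)"
  using sum_le_suminf[of f "{k}"] by (simp add: summableI)

lemma powr_between:
  fixes A s s1 s2 :: real
  assumes "A > 0" "s2 \<le> s" "s \<le> s1"
  shows "A powr s \<le> max (A powr s1) (A powr s2)" "min (A powr s1) (A powr s2) \<le> A powr s"
proof -
  have "A powr s \<le> max (A powr s1) (A powr s2) \<and> min (A powr s1) (A powr s2) \<le> A powr s"
  proof (cases "A \<ge> 1")
    case True
    then have "A powr s \<le> A powr s1" "A powr s2 \<le> A powr s" using assms by (auto intro: powr_mono)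
    then show ?thesis by auto
  next
    case False
    then have "A powr s1 \<le> A powr s" "A powr s \<le> A powr s2" using assms by (auto intro: powr_mono')
    then show ?thesis by auto
  qed
  then show "A powr s \<le> max (A powr s1) (A powr s2)" "min (A powr s1) (A powr s2) \<le> A powr s" by auto
qed

lemma half_power_eq_powr: "(1/2::real) ^ k = 2 powr (- real k)"
  by (simp add: power_one_over powr_minus_divide powr_realpow)

lemma ln_exp_1_plus_ge_1: "(x::real) \<ge> 0 \<Longrightarrow> ln (exp 1 + x) \<ge> 1"
  using ln_le_cancel_iff[of "exp 1" "exp 1 + x"] by (simp add: add_pos_nonneg)

lemma sqrt_2_mult_le: "0 \<le> r \<Longrightarrow> sqrt (2 * r) \<le> 2 * sqrt r"
  using real_sqrt_le_mono[of 2 4] by (simp add: real_sqrt_mult mult_right_mono)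

lemma sqrt_ge_tenth: "1/100 \<le> u \<Longrightarrow> 1/10 \<le> sqrt u"
  by (rule real_le_rsqrt) (simp add: power2_eq_square)

lemma norm_scaleR_sgn: "norm x *\<^sub>R sgn x = (x::'a::real_normed_vector)"
  by (cases "x = 0") (simp_all add: sgn_div_norm)

lemma norm_sgn_diff_le:
  fixes x y :: "'a::real_normed_vector"
  assumes "x \<noteq> 0" "y \<noteq> 0"
  shows "norm (sgn x - sgn y) \<le> 2 * norm (x - y) / norm x"
proof -
  have nx: "norm x > 0" using assms by simp
  have ny: "norm y > 0" using assms by simp
  have "sgn x - sgn y = (1 / norm x) *\<^sub>R (x - y) + ((norm y - norm x) / norm x) *\<^sub>R sgn y"
    using nx ny by (simp add: sgn_div_norm algebra_simps divide_inverse)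
  then have "norm (sgn x - sgn y) \<le> norm ((1 / norm x) *\<^sub>R (x - y)) + norm (((norm y - norm x) / norm x) *\<^sub>R sgn y)"
    by (metis norm_triangle_ineq)
  also have "norm ((1 / norm x) *\<^sub>R (x - y)) = norm (x - y) / norm x" using nx by simp
  also have "norm (((norm y - norm x) / norm x) *\<^sub>R sgn y) = \<bar>norm y - norm x\<bar> / norm x"
    using nx assms by (simp add: norm_sgn abs_div)
  also have "\<bar>norm y - norm x\<bar> / norm x \<le> norm (x - y) / norm x"
    using nx by (intro divide_right_mono) (auto simp: abs_minus_commute norm_minus_commute intro: order_trans[OF norm_triangle_ineq3])
  finally show ?thesis by simp
qed

section \<open>Luxemburg norms with nearly constant exponent\<close>

text \<open>If the Luxemburg modular of \<open>f\<close> at level \<open>t\<close> is \<open>\<integral>\<^sub>E v t^(-1/q)\<close> and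
  \<open>|q - q\<^sub>0| \<cdot> |ln X| \<le> q\<^sub>2 H\<close> on \<open>E\<close>, where \<open>X = \<integral>\<^sub>E v\<close>, then the norm of \<open>f\<close> is
  \<open>X^q\<^sub>0\<close> up to the factor \<open>exp (q\<^sub>2 H)\<close>: replacing the variable exponent by a constant
  one costs only a bounded factor.\<close>

context
  fixes M :: "'a measure" and E :: "'a set" and v f :: "'a \<Rightarrow> ennreal" and q r :: "'a \<Rightarrow> real"
    and q0 q2 H X :: real
  assumes v: "v \<in> borel_measurable M" and E: "E \<in> sets M"
    and X: "(\<integral>\<^sup>+z. v z * indicator E z \<partial>M) = ennreal X" "X > 0"
    and AEq: "AE z in M. z \<in> E \<longrightarrow> 0 < q z \<and> q z \<le> q2 \<and> \<bar>(q0 - q z) * ln X\<bar> \<le> q2 * H"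
    and q2: "q2 > 0"
    and modular: "\<And>t. t > 0 \<Longrightarrow>
      AE z in M. epowr (f z / ennreal t) (r z) = indicator E z * v z * ennreal (t powr (-1 / q z))"
begin

lemma luxemburg_modular_eq:
  "t > 0 \<Longrightarrow> (\<integral>\<^sup>+ z. epowr (f z / ennreal t) (r z) \<partial>M)
    = (\<integral>\<^sup>+ z. v z * indicator E z * ennreal (t powr (-1 / q z)) \<partial>M)"
  by (rule nn_integral_cong_AE) (use modular in \<open>auto simp: mult_ac elim!: eventually_mono\<close>)

lemma nn_integral_v_times_const: "(\<integral>\<^sup>+ z. v z * indicator E z * ennreal c \<partial>M) = ennreal c * ennreal X"
  using X(1) by (subst nn_integral_multc) (use v E in \<open>auto simp: mult.commute\<close>)

lemma luxemburg_norm_ge_exp: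
  "ennreal (exp (q0 * ln X - q2 * H))
    \<le> Inf {ennreal t |t. t > 0 \<and> (\<integral>\<^sup>+ z. epowr (f z / ennreal t) (r z) \<partial>M) \<le> 1}"
proof (rule Inf_greatest)
  fix s assume "s \<in> {ennreal t |t. t > 0 \<and> (\<integral>\<^sup>+ z. epowr (f z / ennreal t) (r z) \<partial>M) \<le> 1}"
  then obtain t where t: "s = ennreal t" "t > 0" and le: "(\<integral>\<^sup>+ z. epowr (f z / ennreal t) (r z) \<partial>M) \<le> 1"
    by auto
  show "ennreal (exp (q0 * ln X - q2 * H)) \<le> s"
  proof (rule ccontr)
    assume "\<not> ?thesis"
    then have "t < exp (q0 * ln X - q2 * H)" using t by (simp add: ennreal_le_iff)
    then have lt: "ln t < q0 * ln X - q2 * H" using t by (metis ln_exp ln_less_cancel_iff exp_gt_zero)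
    define D where "D = q0 * ln X - q2 * H - ln t"
    have D: "D > 0" using lt by (simp add: D_def)
    have pt: "v z * indicator E z * ennreal (exp (D / q2) / X) \<le> v z * indicator E z * ennreal (t powr (-1 / q z))"
      if "z \<in> E \<longrightarrow> 0 < q z \<and> q z \<le> q2 \<and> \<bar>(q0 - q z) * ln X\<bar> \<le> q2 * H" for z
    proof (cases "z \<in> E")
      case True
      with that have qz: "0 < q z" "q z \<le> q2" "\<bar>(q0 - q z) * ln X\<bar> \<le> q2 * H" by auto
      have "- ln t - q z * (D / q2 - ln X) = D * (1 - q z / q2) + (q2 * H - (q0 - q z) * ln X)"
        using q2 by (simp add: D_def field_simps)
      moreover have "D * (1 - q z / q2) \<ge> 0" using D qz q2 by (simp add: field_simps)
      moreover have "q2 * H - (q0 - q z) * ln X \<ge> 0" using qz(3) by (simp add: abs_le_iff)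
      ultimately have "q z * (D / q2 - ln X) \<le> - ln t" by linarith
      then have "exp (D / q2 - ln X) \<le> exp (- ln t / q z)" using qz by (simp add: field_simps)
      moreover have "exp (D / q2 - ln X) = exp (D / q2) / X" using X(2) by (simp add: exp_diff)
      moreover have "t powr (-1 / q z) = exp (- ln t / q z)" using t by (simp add: powr_def)
      ultimately show ?thesis by (auto intro!: mult_left_mono ennreal_leI)
    qed simp
    have "ennreal (exp (D / q2) / X) * ennreal X \<le> (\<integral>\<^sup>+ z. epowr (f z / ennreal t) (r z) \<partial>M)"
      unfolding luxemburg_modular_eq[OF t(2)] nn_integral_v_times_const[symmetric]
      by (rule nn_integral_mono_AE) (use AEq pt in auto)
    also have "\<dots> \<le> 1" by (rule le)
    finally have "exp (D / q2) \<le> 1" using X(2) by (simp add: ennreal_mult'' [symmetric] ennreal_le_iff)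
    moreover have "exp (D / q2) > 1" using D q2 by simp
    ultimately show False by simp
  qed
qed

lemma luxemburg_norm_le_exp:
  "Inf {ennreal t |t. t > 0 \<and> (\<integral>\<^sup>+ z. epowr (f z / ennreal t) (r z) \<partial>M) \<le> 1}
    \<le> ennreal (exp (q0 * ln X + q2 * H))"
proof (rule Inf_lower)
  define t where "t = exp (q0 * ln X + q2 * H)"
  have t: "t > 0" by (simp add: t_def)
  have pt: "v z * indicator E z * ennreal (t powr (-1 / q z)) \<le> v z * indicator E z * ennreal (1 / X)"
    if "z \<in> E \<longrightarrow> 0 < q z \<and> q z \<le> q2 \<and> \<bar>(q0 - q z) * ln X\<bar> \<le> q2 * H" for z
  proof (cases "z \<in> E")
    case True
    with that have qz: "0 < q z" "q z \<le> q2" "\<bar>(q0 - q z) * ln X\<bar> \<le> q2 * H" by auto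
    have "q z * (- ln X) \<ge> - ln t" unfolding t_def using qz q2
      by (simp add: field_simps abs_le_iff)
    then have "exp (- ln t / q z) \<le> exp (- ln X)" using qz by (simp add: field_simps)
    moreover have "t powr (-1 / q z) = exp (- ln t / q z)" using t by (simp add: powr_def)
    moreover have "exp (- ln X) = 1 / X" using X(2) by (simp add: exp_minus field_simps)
    ultimately show ?thesis by (auto intro!: mult_left_mono ennreal_leI)
  qed simp
  have "(\<integral>\<^sup>+ z. epowr (f z / ennreal t) (r z) \<partial>M) \<le> ennreal (1 / X) * ennreal X"
    unfolding luxemburg_modular_eq[OF t] nn_integral_v_times_const[symmetric]
    by (rule nn_integral_mono_AE) (use AEq pt in auto)
  also have "\<dots> = 1" using X(2) by (simp add: ennreal_mult'' [symmetric])
  finally show "ennreal (exp (q0 * ln X + q2 * H))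
      \<in> {ennreal t |t. t > 0 \<and> (\<integral>\<^sup>+ z. epowr (f z / ennreal t) (r z) \<partial>M) \<le> 1}"
    using t t_def by auto
qed

lemma luxemburg_norm_log_bound:
  "\<exists>l>0. Inf {ennreal t |t. t > 0 \<and> (\<integral>\<^sup>+ z. epowr (f z / ennreal t) (r z) \<partial>M) \<le> 1} = ennreal l
     \<and> \<bar>ln l - q0 * ln X\<bar> \<le> q2 * H"
proof -
  define V where "V = Inf {ennreal t |t. t > 0 \<and> (\<integral>\<^sup>+ z. epowr (f z / ennreal t) (r z) \<partial>M) \<le> 1}"
  have e1: "ennreal (exp (q0 * ln X - q2 * H)) \<le> V" using luxemburg_norm_ge_exp by (simp add: V_def)
  have e2: "V \<le> ennreal (exp (q0 * ln X + q2 * H))" using luxemburg_norm_le_exp by (simp add: V_def)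
  obtain l where l: "V = ennreal l" "l \<ge> 0" using e2 by (cases V) (auto simp: top_unique)
  have le: "exp (q0 * ln X - q2 * H) \<le> l" "l \<le> exp (q0 * ln X + q2 * H)"
    using e1 e2 l by (auto simp: ennreal_le_iff)
  have lpos: "l > 0" using le(1) exp_gt_zero[of "q0 * ln X - q2 * H"] by linarith
  have "q0 * ln X - q2 * H \<le> ln l" using le(1) lpos by (metis ln_exp ln_le_cancel_iff exp_gt_zero)
  moreover have "ln l \<le> q0 * ln X + q2 * H" using le(2) lpos by (metis ln_exp ln_le_cancel_iff exp_gt_zero)
  ultimately have "\<bar>ln l - q0 * ln X\<bar> \<le> q2 * H" by (simp add: abs_le_iff)
  then show ?thesis using l lpos unfolding V_def by blast
qed

end

section \<open>The weighted measure\<close>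

lemma emeasure_lborel_annulus_le:
  fixes r s :: real
  assumes "0 \<le> r" "r \<le> s" "s \<le> 1"
  shows "emeasure lborel (ball (0::'a::euclidean_space) s - ball 0 r)
    \<le> ennreal (unit_ball_vol DIM('a) * DIM('a) * (s - r))"
proof -
  define U N where "U = unit_ball_vol DIM('a)" and "N = DIM('a)"
  have U: "U \<ge> 0" by (simp add: U_def)
  have "emeasure lborel (ball (0::'a) s - ball 0 r)
      = emeasure lborel (ball (0::'a) s) - emeasure lborel (ball (0::'a) r)"
    using assms emeasure_lborel_ball_finite[of "0::'a" r] by (intro emeasure_Diff) auto
  also have "\<dots> = ennreal (U * (s ^ N - r ^ N))"
    using assms U by (simp add: emeasure_ball U_def N_def ennreal_minus power_mono
        algebra_simps mult_left_mono)
  also have "\<dots> \<le> ennreal (U * N * (s - r))"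
  proof (rule ennreal_leI)
    have "s ^ N - r ^ N = (s - r) * (\<Sum>i<N. r ^ (N - Suc i) * s ^ i)"
      by (rule power_diff_sumr2)
    also have "\<dots> \<le> (s - r) * (\<Sum>i<N. 1)"
      using assms by (intro mult_left_mono sum_mono) (auto intro!: mult_le_one power_le_one)
    finally show "U * (s ^ N - r ^ N) \<le> U * N * (s - r)"
      using U by (simp add: mult_left_mono mult_ac)
  qed
  finally show ?thesis by (simp add: U_def N_def)
qed

text \<open>For \<open>\<alpha> < 1\<close> the weight is at most \<open>2^((k+1)(1-\<alpha>))\<close> on the dyadic shell
  \<open>1 - 2^-k \<le> |z| < 1 - 2^-(k+1)\<close>, whose volume is \<open>O(2^-k)\<close>.\<close>

lemma weight_le_dyadic_shells:
  fixes \<alpha> :: real and z :: "'a::real_normed_vector"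
  assumes "\<alpha> < 1"
  defines "A k \<equiv> ball (0::'a) (1 - (1/2) ^ Suc k) - ball 0 (1 - (1/2) ^ k)"
  shows "indicator (ball 0 1) z * ennreal ((1 - (norm z)^2) powr (\<alpha> - 1))
    \<le> (\<Sum>k. indicator (A k) z * ennreal (2 powr (real (Suc k) * (1 - \<alpha>))))"
proof (cases "z \<in> ball 0 1")
  case True
  then have nz: "norm z < 1" by simp
  have ex: "\<exists>n. norm z < 1 - (1/2) ^ n"
    using real_arch_pow_inv[of "1 - norm z" "1/2"] nz by (auto simp: algebra_simps)
  define n where "n = (LEAST n. norm z < 1 - (1/2::real) ^ n)"
  have n1: "norm z < 1 - (1/2) ^ n" unfolding n_def by (rule LeastI_ex) (rule ex)
  then obtain k where k: "n = Suc k" by (cases n) auto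
  have "\<not> norm z < 1 - (1/2) ^ k"
    using not_less_Least[of k "\<lambda>n. norm z < 1 - (1/2::real) ^ n"] k unfolding n_def by auto
  then have zA: "z \<in> A k" using n1 k by (auto simp: A_def)
  have "(1/2) ^ Suc k \<le> 1 - (norm z)^2"
    using n1 k nz mult_left_le[of "norm z" "norm z"] by (simp add: power2_eq_square)
  then have "(1 - (norm z)^2) powr (\<alpha> - 1) \<le> ((1/2) ^ Suc k) powr (\<alpha> - 1)"
    using assms by (intro powr_mono2') auto
  also have "\<dots> = 2 powr (real (Suc k) * (1 - \<alpha>))"
    unfolding half_power_eq_powr by (simp add: powr_powr algebra_simps del: of_nat_Suc)
  finally have "indicator (ball 0 1) z * ennreal ((1 - (norm z)^2) powr (\<alpha> - 1))
     \<le> indicator (A k) z * ennreal (2 powr (real (Suc k) * (1 - \<alpha>)))"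
    using zA True by (simp add: ennreal_leI)
  also have "\<dots> \<le> (\<Sum>k. indicator (A k) z * ennreal (2 powr (real (Suc k) * (1 - \<alpha>))))"
    by (rule ennreal_term_le_suminf)
  finally show ?thesis .
qed simp

lemma nn_integral_ball_weight_finite:
  fixes \<alpha> :: real
  assumes "\<alpha> > 0"
  shows "(\<integral>\<^sup>+z. indicator (ball (0::'a::euclidean_space) 1) z * ennreal ((1 - (norm z)^2) powr (\<alpha> - 1)) \<partial>lborel) < \<infinity>"
proof (cases "\<alpha> \<ge> 1")
  case True
  have "(\<integral>\<^sup>+z. indicator (ball (0::'a) 1) z * ennreal ((1 - (norm z)^2) powr (\<alpha> - 1)) \<partial>lborel)
     \<le> (\<integral>\<^sup>+z. indicator (ball (0::'a) 1) z \<partial>lborel)"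
  proof (rule nn_integral_mono)
    fix z :: 'a
    have "(1 - (norm z)^2) powr (\<alpha> - 1) \<le> 1" if "z \<in> ball 0 1"
      using that True powr_mono2[of "\<alpha> - 1" "1 - (norm z)^2" 1] by (simp add: abs_square_le_1)
    then show "indicator (ball 0 1) z * ennreal ((1 - (norm z)^2) powr (\<alpha> - 1)) \<le> indicator (ball 0 1) z"
      by (simp add: indicator_def ennreal_le_1)
  qed
  also have "\<dots> < \<infinity>" using emeasure_lborel_ball_finite by simp
  finally show ?thesis .
next
  case False
  define A where "A k = ball (0::'a) (1 - (1/2) ^ Suc k) - ball 0 (1 - (1/2) ^ k)" for k
  define c where "c = unit_ball_vol DIM('a) * DIM('a)"
  have c: "c \<ge> 0" by (simp add: c_def)
  have A_borel: "A k \<in> sets borel" for k by (simp add: A_def)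
  have shell: "ennreal (2 powr (real (Suc k) * (1 - \<alpha>))) * emeasure lborel (A k)
      \<le> ennreal (c * (2 powr (-\<alpha>)) ^ Suc k)" for k
  proof -
    have "emeasure lborel (A k) \<le> ennreal (c * (1/2) ^ Suc k)"
      using emeasure_lborel_annulus_le[of "1 - (1/2) ^ k" "1 - (1/2) ^ Suc k", where 'a='a]
      by (simp add: A_def c_def power_le_one)
    then have "ennreal (2 powr (real (Suc k) * (1 - \<alpha>))) * emeasure lborel (A k)
        \<le> ennreal (2 powr (real (Suc k) * (1 - \<alpha>))) * ennreal (c * (1/2) ^ Suc k)"
      by (rule mult_left_mono) simp
    also have "\<dots> = ennreal (2 powr (real (Suc k) * (1 - \<alpha>)) * (c * (1/2) ^ Suc k))"
      using c by (intro ennreal_mult[symmetric]) auto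
    also have "2 powr (real (Suc k) * (1 - \<alpha>)) * (c * (1/2) ^ Suc k) = c * (2 powr (-\<alpha>)) ^ Suc k"
      unfolding half_power_eq_powr
      by (simp add: powr_realpow[symmetric] powr_powr powr_add[symmetric] algebra_simps
          del: power_Suc of_nat_Suc)
    finally show ?thesis .
  qed
  have "(\<integral>\<^sup>+z. indicator (ball (0::'a) 1) z * ennreal ((1 - (norm z)^2) powr (\<alpha> - 1)) \<partial>lborel)
     \<le> (\<integral>\<^sup>+z. (\<Sum>k. indicator (A k) z * ennreal (2 powr (real (Suc k) * (1 - \<alpha>)))) \<partial>lborel)"
    unfolding A_def using False by (intro nn_integral_mono weight_le_dyadic_shells) simp
  also have "\<dots> = (\<Sum>k. ennreal (2 powr (real (Suc k) * (1 - \<alpha>))) * emeasure lborel (A k))"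
    using A_borel by (simp add: nn_integral_suminf nn_integral_multc mult.commute)
  also have "\<dots> \<le> (\<Sum>k. ennreal (c * (2 powr (-\<alpha>)) ^ Suc k))"
    by (intro suminf_le shell) auto
  also have "\<dots> = ennreal (\<Sum>k. c * (2 powr (-\<alpha>)) ^ Suc k)"
    using assms c by (intro suminf_ennreal2)
      (auto intro!: summable_mult summable_geometric summable_Suc_iff[THEN iffD2] powr_less_one)
  also have "\<dots> < \<infinity>" by simp
  finally show ?thesis .
qed

lemma emeasure_lborel_unitB: "emeasure lborel (unitB :: ('n::finite) cvec set) = ennreal (unit_ball_vol (DIM('n cvec)))"
  unfolding unitB_def by (subst emeasure_ball) auto

lemma sets_mu_alpha[simp, measurable_cong]: "sets (mu_alpha \<alpha>) = sets borel"
  by (simp add: mu_alpha_def)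

lemma space_mu_alpha[simp]: "space (mu_alpha \<alpha>) = UNIV"
  by (simp add: mu_alpha_def)

lemma unitB_borel[measurable]: "unitB \<in> sets borel"
  by (simp add: unitB_def)

definition mu_alpha_density :: "real \<Rightarrow> ('n::finite) cvec \<Rightarrow> ennreal" where
  "mu_alpha_density \<alpha> z = indicator unitB z * ennreal ((1 - (norm z)\<^sup>2) powr (\<alpha> - 1)) / emeasure lborel (unitB :: 'n cvec set)"

lemma borel_measurable_mu_alpha_density[measurable]: "mu_alpha_density \<alpha> \<in> borel_measurable borel"
  unfolding mu_alpha_density_def by measurable

lemma mu_alpha_eq_density: "mu_alpha \<alpha> = density lborel (mu_alpha_density \<alpha>)"
  by (simp add: mu_alpha_def mu_alpha_density_def[abs_def])

lemma emeasure_mu_alpha: "A \<in> sets borel \<Longrightarrow> emeasure (mu_alpha \<alpha>) A = (\<integral>\<^sup>+z. mu_alpha_density \<alpha> z * indicator A z \<partial>lborel)"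
  unfolding mu_alpha_eq_density by (subst emeasure_density) auto

lemma emeasure_mu_alpha_UNIV_finite:
  assumes "\<alpha> > 0"
  shows "emeasure (mu_alpha \<alpha>) (UNIV :: ('n::finite) cvec set) < \<infinity>"
proof -
  define U where "U = unit_ball_vol (DIM('n cvec))"
  have U: "U > 0" by (simp add: U_def)
  have "emeasure (mu_alpha \<alpha>) (UNIV :: 'n cvec set) = (\<integral>\<^sup>+(z::'n cvec). mu_alpha_density \<alpha> z \<partial>lborel)"
    by (subst emeasure_mu_alpha) auto
  also have "\<dots> = (\<integral>\<^sup>+(z::'n cvec). (indicator unitB z * ennreal ((1 - (norm z)\<^sup>2) powr (\<alpha> - 1))) * ennreal (1 / U) \<partial>lborel)"
    unfolding mu_alpha_density_def emeasure_lborel_unitB U_def[symmetric] using U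
    by (intro nn_integral_cong) (simp add: divide_ennreal_def ennreal_inverse_positive ennreal_divide_times ennreal_inverse_1 divide_ennreal[symmetric] ennreal_times_divide)
  also have "\<dots> = (\<integral>\<^sup>+(z::'n cvec). indicator unitB z * ennreal ((1 - (norm z)\<^sup>2) powr (\<alpha> - 1)) \<partial>lborel) * ennreal (1 / U)"
    by (rule nn_integral_multc) measurable
  also have "\<dots> < \<infinity>"
    using nn_integral_ball_weight_finite[OF assms, where 'a="'n cvec"] unfolding unitB_def
    by (simp add: ennreal_mult_less_top)
  finally show ?thesis .
qed

lemma emeasure_mu_alpha_finite: "\<alpha> > 0 \<Longrightarrow> emeasure (mu_alpha \<alpha>) (A :: ('n::finite) cvec set) < \<infinity>"
  using emeasure_space[of "mu_alpha \<alpha>" A] emeasure_mu_alpha_UNIV_finite[of \<alpha>, where 'n='n] by simp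

lemma AE_mu_alpha_unitB: "AE z in mu_alpha \<alpha>. (z :: ('n::finite) cvec) \<in> unitB"
  unfolding mu_alpha_eq_density by (subst AE_density) (auto intro!: AE_I2 simp: mu_alpha_density_def split: split_indicator)

lemma mu_alpha_density_lower:
  assumes "0 < \<eta>" "\<eta> \<le> 1" "norm (z::('n::finite) cvec) \<le> 1 - \<eta>"
  shows "ennreal (\<eta> powr (max (\<alpha> - 1) 0) / unit_ball_vol (DIM('n cvec))) \<le> mu_alpha_density \<alpha> z"
proof -
  have zB: "z \<in> unitB" using assms by (simp add: unitB_def)
  have n: "0 \<le> norm z" "norm z < 1" using assms by auto
  have b: "\<eta> \<le> 1 - (norm z)\<^sup>2"
  proof -
    have "(norm z)\<^sup>2 \<le> norm z" using n by (simp add: power2_eq_square mult_left_le)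
    then show ?thesis using assms by linarith
  qed
  have "\<eta> powr (max (\<alpha> - 1) 0) \<le> (1 - (norm z)\<^sup>2) powr (\<alpha> - 1)"
  proof (cases "\<alpha> \<ge> 1")
    case True then show ?thesis using b assms by (simp add: max_def powr_mono2)
  next
    case False
    then have "1 powr (\<alpha> - 1) \<le> (1 - (norm z)\<^sup>2) powr (\<alpha> - 1)"
      using b assms by (intro powr_mono2') auto
    then show ?thesis using False by (simp add: max_def)
  qed
  then show ?thesis unfolding mu_alpha_density_def emeasure_lborel_unitB using zB
    by (simp add: divide_ennreal ennreal_leI divide_right_mono)
qed

lemma emeasure_mu_alpha_ball_lower:
  fixes c :: "('n::finite) cvec"
  assumes S: "S \<in> sets borel" and sub: "ball c \<rho> \<subseteq> S" and \<rho>: "\<rho> > 0" and \<eta>: "0 < \<eta>" "\<eta> \<le> 1"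
    and nb: "\<And>z. z \<in> ball c \<rho> \<Longrightarrow> norm z \<le> 1 - \<eta>"
  shows "ennreal (\<eta> powr (max (\<alpha> - 1) 0) * \<rho> ^ DIM('n cvec)) \<le> emeasure (mu_alpha \<alpha>) S"
proof -
  define U where "U = unit_ball_vol (DIM('n cvec))"
  have U: "U > 0" by (simp add: U_def)
  have "ennreal (\<eta> powr (max (\<alpha> - 1) 0) * \<rho> ^ DIM('n cvec))
      = ennreal (\<eta> powr (max (\<alpha> - 1) 0) / U) * emeasure lborel (ball c \<rho>)"
  proof -
    have e: "emeasure lborel (ball c \<rho>) = ennreal (U * \<rho> ^ DIM('n cvec))"
      unfolding U_def using \<rho> by (subst emeasure_ball) auto
    have "\<eta> powr (max (\<alpha> - 1) 0) / U * (U * \<rho> ^ DIM('n cvec)) = \<eta> powr (max (\<alpha> - 1) 0) * \<rho> ^ DIM('n cvec)"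
      using U by simp
    then show ?thesis unfolding e using U \<rho> by (simp add: ennreal_mult''[symmetric])
  qed
  also have "\<dots> = (\<integral>\<^sup>+z. ennreal (\<eta> powr (max (\<alpha> - 1) 0) / U) * indicator (ball c \<rho>) z \<partial>lborel)"
    by (subst nn_integral_cmult_indicator) auto
  also have "\<dots> \<le> (\<integral>\<^sup>+z. mu_alpha_density \<alpha> z * indicator (ball c \<rho>) z \<partial>lborel)"
  proof (rule nn_integral_mono)
    fix z show "ennreal (\<eta> powr (max (\<alpha> - 1) 0) / U) * indicator (ball c \<rho>) z \<le> mu_alpha_density \<alpha> z * indicator (ball c \<rho>) z"
      using mu_alpha_density_lower[OF \<eta>, of z \<alpha>] nb[of z] unfolding U_def by (cases "z \<in> ball c \<rho>") auto
  qed
  also have "\<dots> = emeasure (mu_alpha \<alpha>) (ball c \<rho>)" by (subst emeasure_mu_alpha) auto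
  also have "\<dots> \<le> emeasure (mu_alpha \<alpha>) S" using S sub by (intro emeasure_mono) auto
  finally show ?thesis .
qed

lemma wmeas_mono: "E \<subseteq> F \<Longrightarrow> wmeas \<alpha> v E \<le> wmeas \<alpha> v F"
  unfolding wmeas_def by (intro nn_integral_mono) (auto simp: indicator_def mult_left_mono)

section \<open>Geometry of the pseudo-balls\<close>

lemma cinner_Re: "Re (cinner x y) = inner x y"
  by (simp add: cinner_def inner_vec_def Re_sum inner_complex_def)

lemma norm_cvec_squared: "(norm (x::('n::finite) cvec))\<^sup>2 = (\<Sum>i\<in>UNIV. (cmod (x $ i))\<^sup>2)"
  by (simp add: norm_vec_def L2_set_def sum_nonneg)

lemma cinner_self: "cinner x x = complex_of_real ((norm x)\<^sup>2)"
  unfolding cinner_def norm_cvec_squared of_real_sum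
  by (intro sum.cong refl) (simp add: complex_mult_cnj cmod_power2)

lemma norm_cinner_le: "cmod (cinner x y) \<le> norm x * norm y"
proof -
  have "cmod (cinner x y) \<le> (\<Sum>i\<in>UNIV. cmod (x $ i * cnj (y $ i)))"
    unfolding cinner_def by (rule norm_sum)
  also have "\<dots> = (\<Sum>i\<in>UNIV. \<bar>cmod (x $ i)\<bar> * \<bar>cmod (y $ i)\<bar>)" by (simp add: norm_mult)
  also have "\<dots> \<le> L2_set (\<lambda>i. cmod (x $ i)) UNIV * L2_set (\<lambda>i. cmod (y $ i)) UNIV"
    by (rule L2_set_mult_ineq)
  finally show ?thesis by (simp add: norm_vec_def)
qed

lemma cinner_diff_right: "cinner x (y - w) = cinner x y - cinner x w"
  by (simp add: cinner_def sum_subtractf ring_distribs)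

lemma cinner_scaleR_left: "cinner (a *\<^sub>R x) y = complex_of_real a * cinner x y"
  unfolding cinner_def vector_scaleR_component scaleR_conv_of_real[where 'a=complex] by (simp add: sum_distrib_left mult_ac)

lemma cinner_scaleR_right: "cinner x (a *\<^sub>R y) = complex_of_real a * cinner x y"
  unfolding cinner_def vector_scaleR_component scaleR_conv_of_real[where 'a=complex] by (simp add: sum_distrib_left mult_ac)

lemma cinner_sgn:
  assumes "z \<noteq> 0" "w \<noteq> 0"
  shows "cinner z w / complex_of_real (norm z * norm w) = cinner (sgn z) (sgn w)"
proof -
  have s: "sgn v = inverse (norm v) *\<^sub>R v" for v :: "'a cvec" by (simp add: sgn_div_norm)
  show ?thesis unfolding s cinner_scaleR_left cinner_scaleR_right using assms
    by (simp add: field_simps)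
qed

lemma norm_diff_unit_squared_le:
  assumes "norm a = 1" "norm b = 1"
  shows "(norm (a - b))\<^sup>2 \<le> 2 * cmod (1 - cinner a b)"
proof -
  have "(norm (a - b))\<^sup>2 = 2 - 2 * inner a b" using dot_norm_neg[of a b] assms by simp
  also have "inner a b = Re (cinner a b)" by (simp add: cinner_Re)
  also have "2 - 2 * Re (cinner a b) = 2 * Re (1 - cinner a b)" by simp
  also have "\<dots> \<le> 2 * cmod (1 - cinner a b)" using complex_Re_le_cmod[of "1 - cinner a b"] by simp
  finally show ?thesis .
qed

lemma norm_one_minus_cinner_le:
  assumes "norm a = 1"
  shows "cmod (1 - cinner a b) \<le> norm (a - b)"
proof -
  have "1 - cinner a b = cinner a (a - b)" using assms by (simp add: cinner_diff_right cinner_self)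
  then show ?thesis using norm_cinner_le[of a "a - b"] assms by simp
qed

lemma borel_measurable_cinner[measurable]: "(\<lambda>w. cinner z w) \<in> borel_measurable borel"
  by (rule borel_measurable_continuous_onI) (unfold cinner_def, intro continuous_intros)

lemma pdist_nonzero: "z \<noteq> 0 \<Longrightarrow> w \<noteq> 0 \<Longrightarrow> pdist z w = \<bar>norm z - norm w\<bar> + cmod (1 - cinner (sgn z) (sgn w))"
  unfolding pdist_def using cinner_sgn[of z w] by simp

lemma pdist_nonneg: "pdist z w \<ge> 0"
  by (simp add: pdist_def)

lemma pdist_pos:
  assumes "z \<noteq> w" shows "pdist z w > 0"
proof (cases "z \<noteq> 0 \<and> w \<noteq> 0")
  case True
  show ?thesis
  proof (rule ccontr)
    assume "\<not> ?thesis"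
    then have "pdist z w = 0" using pdist_nonneg[of z w] by simp
    then have a: "norm z = norm w" "cmod (1 - cinner (sgn z) (sgn w)) = 0"
      using pdist_nonzero[of z w] True by (auto simp: add_nonneg_eq_0_iff)
    have "(norm (sgn z - sgn w))\<^sup>2 \<le> 0" using norm_diff_unit_squared_le[of "sgn z" "sgn w"] True a(2) by (simp add: norm_sgn)
    then have "sgn z = sgn w" by simp
    then have "norm z *\<^sub>R sgn z = norm w *\<^sub>R sgn w" using a(1) by simp
    then show False using assms by (simp add: norm_scaleR_sgn)
  qed
next
  case False then show ?thesis using assms by (auto simp: pdist_def add_pos_nonneg add_nonneg_pos)
qed

lemma pdist_le_3:
  assumes "x \<in> unitB" "y \<in> unitB"
  shows "pdist x y \<le> 3"
proof -
  have n: "norm x < 1" "norm y < 1" using assms by (auto simp: unitB_def)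
  show ?thesis
  proof (cases "x \<noteq> 0 \<and> y \<noteq> 0")
    case True
    have "cmod (1 - cinner (sgn x) (sgn y)) \<le> cmod 1 + cmod (cinner (sgn x) (sgn y))" by (rule norm_triangle_ineq4)
    also have "cmod (cinner (sgn x) (sgn y)) \<le> norm (sgn x) * norm (sgn y)" by (rule norm_cinner_le)
    finally have "cmod (1 - cinner (sgn x) (sgn y)) \<le> 2" using True by (simp add: norm_sgn)
    moreover have "\<bar>norm x - norm y\<bar> \<le> 1" unfolding abs_le_iff using n norm_ge_zero[of x] norm_ge_zero[of y] by linarith
    ultimately show ?thesis using True by (simp add: pdist_nonzero)
  next
    case False then show ?thesis using n by (auto simp: pdist_def)
  qed
qed

lemma borel_measurable_pdist[measurable]: "(\<lambda>w. pdist z w) \<in> borel_measurable borel"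
proof -
  have s: "{w \<in> space borel. z \<noteq> 0 \<and> w \<noteq> (0::'n::finite cvec)} \<in> sets borel"
  proof (cases "z = 0")
    case True then show ?thesis by simp
  next
    case False
    then have "{w \<in> space borel. z \<noteq> 0 \<and> w \<noteq> (0::'n::finite cvec)} = - {0}" by auto
    then show ?thesis by (simp add: borel_closed)
  qed
  show ?thesis unfolding pdist_def by (measurable; (rule s)?)
qed

lemma pball_borel[measurable]: "pball z r \<in> sets borel"
proof -
  have "pball z r = unitB \<inter> {w \<in> space borel. pdist z w < r}" by (auto simp: pball_def)
  also have "\<dots> \<in> sets borel" by (intro sets.Int) (simp_all add: unitB_def)
  finally show ?thesis .
qed

lemma pball_subset_unitB: "pball z r \<subseteq> unitB" by (auto simp: pball_def)

lemma pball_small_radius: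
  assumes z: "z \<in> unitB" and r: "r > 1 - norm z" "r < 1/100" and \<zeta>: "\<zeta> \<in> pball z r"
  shows "\<zeta> \<noteq> 0" "norm (\<zeta> - z) \<le> r + sqrt (2 * r)" "norm \<zeta> \<ge> 1/2"
proof -
  have nz: "norm z < 1" using z by (simp add: unitB_def)
  have z0: "z \<noteq> 0" using r nz by auto
  have pd: "pdist z \<zeta> < r" using \<zeta> by (simp add: pball_def)
  show n0: "\<zeta> \<noteq> 0"
  proof
    assume "\<zeta> = 0"
    then have "pdist z \<zeta> = norm z" by (simp add: pdist_def)
    then show False using pd r by simp
  qed
  have pd2: "\<bar>norm z - norm \<zeta>\<bar> + cmod (1 - cinner (sgn z) (sgn \<zeta>)) < r"
    using pd pdist_nonzero[OF z0 n0] by simp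
  have a: "\<bar>norm z - norm \<zeta>\<bar> < r" "cmod (1 - cinner (sgn z) (sgn \<zeta>)) < r"
    using pd2 by (auto intro: le_less_trans[rotated])
  have "(norm (sgn z - sgn \<zeta>))\<^sup>2 \<le> 2 * r"
    using norm_diff_unit_squared_le[of "sgn z" "sgn \<zeta>"] a(2) z0 n0 by (simp add: norm_sgn)
  then have sg: "norm (sgn z - sgn \<zeta>) \<le> sqrt (2 * r)" by (simp add: real_le_rsqrt)
  have "\<zeta> - z = (norm \<zeta> - norm z) *\<^sub>R sgn \<zeta> + norm z *\<^sub>R (sgn \<zeta> - sgn z)"
    by (simp add: scaleR_diff_left scaleR_diff_right norm_scaleR_sgn)
  then have "norm (\<zeta> - z) \<le> norm ((norm \<zeta> - norm z) *\<^sub>R sgn \<zeta>) + norm (norm z *\<^sub>R (sgn \<zeta> - sgn z))"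
    by (metis norm_triangle_ineq)
  also have "norm ((norm \<zeta> - norm z) *\<^sub>R sgn \<zeta>) = \<bar>norm z - norm \<zeta>\<bar>" using n0 by (simp add: norm_sgn abs_minus_commute)
  also have "norm (norm z *\<^sub>R (sgn \<zeta> - sgn z)) = norm z * norm (sgn z - sgn \<zeta>)" by (simp add: norm_minus_commute)
  also have "norm z * norm (sgn z - sgn \<zeta>) \<le> 1 * sqrt (2 * r)"
    using nz sg by (intro mult_mono) auto
  finally show "norm (\<zeta> - z) \<le> r + sqrt (2 * r)" using a(1) by simp
  show "norm \<zeta> \<ge> 1/2" using a(1) r by auto
qed

lemma pdist_pball_le:
  assumes z: "z \<in> unitB" and r: "r > 1 - norm z" and xy: "x \<in> pball z r" "y \<in> pball z r"
  shows "pdist x y \<le> 30 * sqrt (min r 1)"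
proof (cases "r < 1/100")
  case False
  then have "1/10 \<le> sqrt (min r 1)" by (intro sqrt_ge_tenth) auto
  moreover have "pdist x y \<le> 3" using pdist_le_3[of x y] xy pball_subset_unitB[of z r] by blast
  ultimately show ?thesis by linarith
next
  case True
  note X = pball_small_radius[OF z r True xy(1)] and Y = pball_small_radius[OF z r True xy(2)]
  have rpos: "r > 0" using z r by (simp add: unitB_def)
  have d: "norm (x - y) \<le> 2 * r + 2 * sqrt (2 * r)"
    using X(2) Y(2) norm_triangle_ineq4[of "x - z" "y - z"] by (simp add: norm_minus_commute)
  have "pdist x y = \<bar>norm x - norm y\<bar> + cmod (1 - cinner (sgn x) (sgn y))" using X(1) Y(1) by (rule pdist_nonzero)
  also have "\<dots> \<le> norm (x - y) + norm (sgn x - sgn y)"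
    using norm_one_minus_cinner_le[of "sgn x" "sgn y"] X(1) norm_triangle_ineq3[of x y] by (simp add: norm_sgn)
  also have "norm (sgn x - sgn y) \<le> 2 * norm (x - y) / norm x" using X(1) Y(1) by (rule norm_sgn_diff_le)
  also have "2 * norm (x - y) / norm x \<le> 4 * norm (x - y)"
  proof -
    have "2 * norm (x - y) \<le> 4 * norm (x - y) * norm x"
      using mult_left_mono[OF X(3), of "4 * norm (x - y)"] by simp
    then show ?thesis using X(3) by (simp add: divide_le_eq)
  qed
  finally have "pdist x y \<le> 5 * norm (x - y)" by simp
  also have "\<dots> \<le> 10 * r + 10 * sqrt (2 * r)" using d by simp
  also have "10 * r + 10 * sqrt (2 * r) \<le> 30 * sqrt r"
  proof -
    have "sqrt (2 * r) \<le> 2 * sqrt r" using rpos by (intro sqrt_2_mult_le) auto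
    moreover have "r \<le> sqrt r" using rpos True by (intro real_le_rsqrt) (simp add: power2_eq_square mult_le_one)
    ultimately show ?thesis by linarith
  qed
  finally show ?thesis using True by (simp add: min_def)
qed

lemma pball_nonzero_contains_deep_ball:
  assumes z: "z \<in> unitB" and z0: "z \<noteq> 0" and r: "r > 1 - norm z"
  obtains c where "ball c (min r 1 / 40) \<subseteq> pball z r"
    "\<And>\<zeta>. \<zeta> \<in> ball c (min r 1 / 40) \<Longrightarrow> norm \<zeta> \<le> 1 - min r 1 / 4"
proof -
  define u where "u = min r 1"
  have nz: "norm z < 1" using z by (simp add: unitB_def)
  have u: "0 < u" "u \<le> 1" "u \<le> r" using r nz by (auto simp: u_def)
  define m where "m = max (1/4) (norm z - u/2)"
  define \<rho> where "\<rho> = u / 40"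
  define c where "c = m *\<^sub>R sgn z"
  have m: "m \<ge> 1/4" by (simp add: m_def)
  have nc: "norm c = m" using z0 m by (simp add: c_def norm_sgn)
  have sc: "sgn c = sgn z" using m z0 by (simp add: c_def sgn_scaleR sgn_div_norm[of "sgn z"] norm_sgn)
  have key: "norm \<zeta> \<le> 1 - u / 4 \<and> \<zeta> \<in> pball z r" if h: "norm (\<zeta> - c) < \<rho>" for \<zeta>
  proof -
    have lo: "norm \<zeta> \<ge> m - \<rho>" using norm_triangle_ineq3[of \<zeta> c] h nc by (simp add: abs_le_iff)
    have hi: "norm \<zeta> \<le> m + \<rho>" using norm_triangle_ineq3[of \<zeta> c] h nc by (simp add: abs_le_iff)
    have \<zeta>0: "\<zeta> \<noteq> 0" using lo m u by (auto simp: \<rho>_def)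
    have hi2: "norm \<zeta> \<le> 1 - u / 4"
    proof (cases "1/4 \<le> norm z - u/2")
      case True then have "m = norm z - u/2" by (simp add: m_def)
      then show ?thesis using hi nz u unfolding \<rho>_def by linarith
    next
      case False then have "m = 1/4" by (simp add: m_def)
      then show ?thesis using hi nz u unfolding \<rho>_def by linarith
    qed
    have "norm (sgn z - sgn \<zeta>) = norm (sgn c - sgn \<zeta>)" by (simp add: sc)
    also have "\<dots> \<le> 2 * norm (c - \<zeta>) / norm c" using m \<zeta>0 nc by (intro norm_sgn_diff_le) auto
    also have "\<dots> \<le> 8 * \<rho>"
    proof -
      have "2 * norm (c - \<zeta>) \<le> 2 * \<rho>" using h by (simp add: norm_minus_commute)
      also have "2 * \<rho> \<le> 8 * \<rho> * m" using m u by (simp add: \<rho>_def)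
      finally show ?thesis using nc m by (simp add: divide_le_eq)
    qed
    finally have s1: "cmod (1 - cinner (sgn z) (sgn \<zeta>)) \<le> 8 * \<rho>"
      using norm_one_minus_cinner_le[of "sgn z" "sgn \<zeta>"] z0 by (simp add: norm_sgn)
    have s2: "\<bar>norm z - norm \<zeta>\<bar> < r - 8 * \<rho>"
    proof -
      have "\<bar>norm \<zeta> - m\<bar> < \<rho>" using norm_triangle_ineq3[of \<zeta> c] h unfolding nc by linarith
      moreover have "\<bar>m - norm z\<bar> + \<rho> < r - 8 * \<rho>"
      proof (cases "norm z - u/2 \<ge> 1/4")
        case True then show ?thesis using u by (simp add: m_def \<rho>_def max_def)
      next
        case False
        then have mm: "m = 1/4" by (simp add: m_def max_def)
        show ?thesis
        proof (cases "norm z \<ge> 1/4")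
          case True then show ?thesis using False u mm by (simp add: \<rho>_def)
        next
          case False2: False
          then have "r > 3/4" using r by simp
          have "\<bar>m - norm z\<bar> \<le> 1/4" unfolding abs_le_iff mm using False2 norm_ge_zero[of z] by linarith
          then show ?thesis using \<open>r > 3/4\<close> u unfolding \<rho>_def by linarith
        qed
      qed
      ultimately show ?thesis by linarith
    qed
    have "pdist z \<zeta> < r" using s1 s2 pdist_nonzero[OF z0 \<zeta>0] by simp
    moreover have "\<zeta> \<in> unitB" using hi2 u by (simp add: unitB_def)
    ultimately show ?thesis using hi2 by (simp add: pball_def)
  qed
  show ?thesis
  proof (rule that[of c])
    show "ball c (min r 1 / 40) \<subseteq> pball z r"
      using key by (auto simp: u_def[symmetric] \<rho>_def dist_norm norm_minus_commute)
    show "norm \<zeta> \<le> 1 - min r 1 / 4" if "\<zeta> \<in> ball c (min r 1 / 40)" for \<zeta>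
      using key[of \<zeta>] that by (auto simp: u_def[symmetric] \<rho>_def dist_norm norm_minus_commute)
  qed
qed

lemma pball_contains_deep_ball:
  assumes z: "z \<in> unitB" and r: "r > 1 - norm z"
  obtains c where "ball c (min r 1 / 40) \<subseteq> pball z r"
    "\<And>\<zeta>. \<zeta> \<in> ball c (min r 1 / 40) \<Longrightarrow> norm \<zeta> \<le> 1 - min r 1 / 4"
proof (cases "z = 0")
  case True
  then have r1: "r > 1" using r by simp
  obtain c :: "'a cvec" where c: "norm c = 1/4" using vector_choose_size[of "1/4"] by auto
  have "norm \<zeta> \<le> 3/4" if "\<zeta> \<in> ball c (1/40)" for \<zeta>
    using that c norm_triangle_sub[of \<zeta> c] by (simp add: dist_norm norm_minus_commute)
  then show ?thesis
    using True r1 by (intro that[of c]) (fastforce simp: pball_def pdist_def unitB_def)+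
next
  case False
  then show ?thesis using pball_nonzero_contains_deep_ball[OF z False r] that by blast
qed

lemma unitB_in_calB: "(unitB :: ('n::finite) cvec set) \<in> calB"
proof -
  have "pball (0::'n cvec) 2 = unitB" by (auto simp: pball_def pdist_def unitB_def)
  moreover have "(0::'n cvec) \<in> unitB" by (simp add: unitB_def)
  ultimately show ?thesis unfolding calB_def by force
qed

lemma calB_borel: "B \<in> calB \<Longrightarrow> B \<in> sets borel" by (auto simp: calB_def)

lemma calB_subset_unitB: "B \<in> calB \<Longrightarrow> B \<subseteq> unitB" by (auto simp: calB_def pball_def)

section \<open>Log-Hoelder exponents\<close>

lemma minus_ln_le_ln_exp_1_plus_inverse:
  fixes u d :: real
  assumes u: "0 < u" "u \<le> 1" and d: "0 < d" "d \<le> 30 * sqrt u"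
  shows "- ln u \<le> (4 + 4 * ln 30) * ln (exp 1 + 1 / d)"
proof -
  define l where "l = - ln u"
  define L where "L = ln (exp 1 + 1 / d)"
  have epos: "0 < exp 1 + 1 / d" using d by (intro add_pos_pos) auto
  have L1: "L \<ge> 1" unfolding L_def using d by (intro ln_exp_1_plus_ge_1) simp
  have L2: "L \<ge> l / 2 - ln 30"
  proof -
    have su: "sqrt u > 0" using u by simp
    have "1 / (30 * sqrt u) \<le> 1 / d" using d su by (intro divide_left_mono) auto
    also have "\<dots> \<le> exp 1 + 1 / d" by simp
    finally have "ln (1 / (30 * sqrt u)) \<le> L" unfolding L_def using su d epos
      by (subst ln_le_cancel_iff) auto
    moreover have "ln (1 / (30 * sqrt u)) = l / 2 - ln 30"
      using su u by (simp add: ln_div ln_mult ln_sqrt l_def)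
    ultimately show ?thesis by simp
  qed
  have l30: "ln (30::real) \<ge> 0" by simp
  have "l \<le> (4 + 4 * ln 30) * L"
  proof (cases "l \<ge> 4 * ln 30")
    case True then have "l \<le> 4 * L" using L2 by linarith
    have "0 \<le> ln 30 * L" using l30 L1 by simp
    moreover have "(4 + 4*ln 30)*L = 4*L + 4*(ln 30 * L)" by (simp add: algebra_simps)
    ultimately show ?thesis using \<open>l \<le> 4 * L\<close> by linarith
  next
    case False
    have "4*ln 30 \<le> 4*ln 30*L" using mult_left_mono[OF L1, of "4*ln 30"] l30 by simp
    then have "l \<le> 4 * ln 30 * L" using False by linarith
    then show ?thesis using L1 by (simp add: algebra_simps)
  qed
  then show ?thesis by (simp add: l_def L_def)
qed

lemma log_hoelder_scale_bound:
  fixes c' u d m a D :: real and N :: nat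
  assumes c': "c' \<ge> 0" and u: "0 < u" "u \<le> 1" and d: "0 < d" "d \<le> 30 * sqrt u"
    and a: "a \<ge> 0" and m: "0 < m" "(u/4) powr a * (u/40) ^ N \<le> m"
    and D: "0 \<le> D" "D \<le> c' / ln (exp 1 + 1 / d)"
  shows "D * (- ln m) \<le> c' * ((a + N) * (4 + 4 * ln 30) + a * ln 4 + N * ln 40)"
proof -
  define l where "l = - ln u"
  define L where "L = ln (exp 1 + 1 / d)"
  have L1: "L \<ge> 1" unfolding L_def using d by (intro ln_exp_1_plus_ge_1) simp
  have l30: "ln (30::real) \<ge> 0" by simp
  have kl: "l \<le> (4 + 4 * ln 30) * L"
    unfolding l_def L_def by (rule minus_ln_le_ln_exp_1_plus_inverse[OF u d])
  show ?thesis
  proof (cases "- ln m \<le> 0")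
    case True
    then have "D * (- ln m) \<le> 0" using D by (simp add: mult_nonneg_nonpos)
    also have "0 \<le> c' * ((a + N) * (4 + 4 * ln 30) + a * ln 4 + N * ln 40)"
      using c' a l30 by simp
    finally show ?thesis .
  next
    case False
    have u4: "u / 4 > 0" "u / 40 > 0" using u by auto
    have "ln ((u/4) powr a * (u/40) ^ N) \<le> ln m"
      using m u4 by (subst ln_le_cancel_iff) auto
    moreover have "ln ((u/4) powr a * (u/40) ^ N) = a * (- l - ln 4) + N * (- l - ln 40)"
      using u4 u by (simp add: ln_mult ln_powr ln_realpow ln_div l_def)
    ultimately have lm: "- ln m \<le> (a + N) * l + (a * ln 4 + N * ln 40)" by (simp add: algebra_simps)
    have "D * (- ln m) \<le> (c' / L) * ((a + N) * l + (a * ln 4 + N * ln 40))"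
      using D False lm L1 unfolding L_def[symmetric]
      by (intro mult_mono) auto
    also have "\<dots> = c' * ((a + N) * (l / L) + (a * ln 4 + N * ln 40) / L)"
      using L1 by (simp add: field_simps)
    also have "\<dots> \<le> c' * ((a + N) * (4 + 4 * ln 30) + (a * ln 4 + N * ln 40))"
    proof -
      have f1: "(a + N) * (l / L) \<le> (a + N) * (4 + 4 * ln 30)"
        using kl L1 a by (intro mult_left_mono) (auto simp: divide_le_eq mult.commute)
      have x0: "0 \<le> a * ln 4 + N * ln 40" using a by simp
      have "(a * ln 4 + N * ln 40) * 1 \<le> (a * ln 4 + N * ln 40) * L" using mult_left_mono[OF L1 x0] .
      then have f2: "(a * ln 4 + N * ln 40) / L \<le> a * ln 4 + N * ln 40"
        using L1 by (simp add: divide_le_eq)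
      show ?thesis using f1 f2 c' by (intro mult_left_mono) auto
    qed
    finally show ?thesis by (simp add: algebra_simps)
  qed
qed

lemma Plog_bounds:
  fixes p :: "('n::finite) cvec \<Rightarrow> real"
  assumes "Plog \<alpha> p"
  obtains p_minus p_plus c where "1 < p_minus" "AE z in mu_alpha \<alpha>. p_minus \<le> p z"
    "\<And>z. z \<in> unitB \<Longrightarrow> p z \<le> p_plus" "p_minus \<le> p_plus" "c \<ge> 0"
    "\<And>z y. z \<in> unitB \<Longrightarrow> y \<in> unitB \<Longrightarrow> z \<noteq> y \<Longrightarrow> \<bar>p z - p y\<bar> \<le> c / ln (exp 1 + 1 / pdist z y)"
proof -
  obtain p_minus c0 where p_minus: "1 < p_minus" "AE z in mu_alpha \<alpha>. p_minus \<le> p z"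
    and c0: "\<And>z y. z \<in> unitB \<Longrightarrow> y \<in> unitB \<Longrightarrow> z \<noteq> y \<Longrightarrow> \<bar>p z - p y\<bar> \<le> c0 / ln (exp 1 + 1 / pdist z y)"
    using assms unfolding Plog_def by blast
  define c where "c = max c0 0"
  have ln_ge: "ln (exp 1 + 1 / pdist z y) \<ge> 1" for z y :: "'n cvec"
    by (rule ln_exp_1_plus_ge_1) (simp add: pdist_def)
  have hoelder: "\<bar>p z - p y\<bar> \<le> c / ln (exp 1 + 1 / pdist z y)"
    if "z \<in> unitB" "y \<in> unitB" "z \<noteq> y" for z y
    using c0[OF that] ln_ge[of z y] divide_right_mono[of c0 c "ln (exp 1 + 1 / pdist z y)"]
    by (simp add: c_def)
  \<comment> \<open>The log-Hoelder modulus is at most \<open>c\<close>, so \<open>p\<close> is bounded above on the ball.\<close>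
  have "p z \<le> p 0 + c" if "z \<in> unitB" for z
  proof (cases "z = 0")
    case False
    have "\<bar>p z - p 0\<bar> \<le> c / ln (exp 1 + 1 / pdist z 0)"
      using hoelder[OF that _ False] by (simp add: unitB_def)
    also have "\<dots> \<le> c"
      using ln_ge[of z 0] by (simp add: c_def divide_le_eq mult_le_cancel_left1)
    finally show ?thesis by simp
  qed (simp add: c_def)
  then show ?thesis
    by (intro that[of p_minus "max (p 0 + c) p_minus" c] p_minus hoelder) (auto simp: c_def max.coboundedI1)
qed

section \<open>Weights of class \<open>B\<^sup>+\<close>\<close>

locale Bplus_weight =
  fixes \<alpha> :: real and p :: "('n::finite) cvec \<Rightarrow> real" and w :: "'n cvec \<Rightarrow> ennreal"
    and p_minus p_plus c_log :: real
  assumes alpha_pos: "\<alpha> > 0"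
    and p_measurable[measurable]: "p \<in> borel_measurable borel"
    and p_minus_gt_1: "1 < p_minus" and AE_p_minus_le: "AE z in mu_alpha \<alpha>. p_minus \<le> p z"
    and p_le_p_plus: "\<And>z. z \<in> unitB \<Longrightarrow> p z \<le> p_plus" and p_minus_le_p_plus: "p_minus \<le> p_plus"
    and c_log_nonneg: "c_log \<ge> 0"
    and log_hoelder: "\<And>z y. z \<in> unitB \<Longrightarrow> y \<in> unitB \<Longrightarrow> z \<noteq> y \<Longrightarrow>
      \<bar>p z - p y\<bar> \<le> c_log / ln (exp 1 + 1 / pdist z y)"
    and Bplus_w: "Bplus \<alpha> p w" and wmeas_w_unitB_pos: "wmeas \<alpha> w unitB > 0"
begin

abbreviation "M \<equiv> (mu_alpha \<alpha> :: 'n cvec measure)"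

lemma emeasure_mu_finite: "emeasure M A < \<infinity>"
  by (rule emeasure_mu_alpha_finite[OF alpha_pos])

lemma finite_measure_mu: "finite_measure M"
  by (rule finite_measureI) (use emeasure_mu_finite[of UNIV] in \<open>simp add: less_top\<close>)

lemma AE_p_bounds: "AE z in M. z \<in> unitB \<and> p_minus \<le> p z \<and> p z \<le> p_plus"
  using AE_mu_alpha_unitB[of \<alpha>, where 'n='n] AE_p_minus_le by eventually_elim (auto intro: p_le_p_plus)

lemma p_plus_gt_1: "p_plus - 1 > 0" using p_minus_le_p_plus p_minus_gt_1 by simp

lemma emeasure_mu_eq_measure: "emeasure M A = ennreal (measure M A)"
  using emeasure_mu_finite[of A] by (intro emeasure_eq_ennreal_measure) (simp add: less_top)

definition "osc_const = c_log * ((max (\<alpha> - 1) 0 + DIM('n cvec)) * (4 + 4 * ln 30) + max (\<alpha> - 1) 0 * ln 4 + DIM('n cvec) * ln 40)"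

lemma osc_const_nonneg: "osc_const \<ge> 0" using c_log_nonneg by (simp add: osc_const_def)

lemma calB_measure_diameter:
  assumes B: "B \<in> calB"
  obtains u where "0 < u" "u \<le> 1" "(u/4) powr max (\<alpha> - 1) 0 * (u/40)^DIM('n cvec) \<le> measure M B"
    "\<And>x y. x \<in> B \<Longrightarrow> y \<in> B \<Longrightarrow> pdist x y \<le> 30 * sqrt u"
proof -
  obtain z r where Bz: "B = pball z r" and z: "z \<in> unitB" and r: "r > 1 - norm z"
    using B by (auto simp: calB_def)
  have nz: "norm z < 1" using z by (simp add: unitB_def)
  define u where "u = min r 1"
  have u: "0 < u" "u \<le> 1" using r nz by (auto simp: u_def)
  obtain c where c: "ball c (u / 40) \<subseteq> pball z r" "\<And>\<zeta>. \<zeta> \<in> ball c (u / 40) \<Longrightarrow> norm \<zeta> \<le> 1 - u / 4"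
    using pball_contains_deep_ball[OF z r] unfolding u_def by metis
  have "ennreal ((u/4) powr (max (\<alpha> - 1) 0) * (u/40) ^ DIM('n cvec)) \<le> emeasure M (pball z r)"
    using emeasure_mu_alpha_ball_lower[where S="pball z r" and c=c and \<rho>="u/40" and \<eta>="u/4" and \<alpha>=\<alpha>] pball_borel[of z r] c u by auto
  then have "(u/4) powr max (\<alpha> - 1) 0 * (u/40)^DIM('n cvec) \<le> measure M B"
    unfolding emeasure_mu_eq_measure Bz by (simp add: ennreal_le_iff)
  moreover have "pdist x y \<le> 30 * sqrt u" if "x \<in> B" "y \<in> B" for x y
    using pdist_pball_le[OF z r] that unfolding Bz u_def by auto
  ultimately show ?thesis using that u by blast
qed

lemma calB_measure_pos: "B \<in> calB \<Longrightarrow> measure M B > 0"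
proof -
  assume "B \<in> calB"
  then obtain u where u: "0 < u" "u \<le> 1" "(u/4) powr max (\<alpha> - 1) 0 * (u/40)^DIM('n cvec) \<le> measure M B"
    and "\<And>x y. x \<in> B \<Longrightarrow> y \<in> B \<Longrightarrow> pdist x y \<le> 30 * sqrt u" using calB_measure_diameter[OF \<open>B \<in> calB\<close>] by blast
  have "0 < (u/4) powr max (\<alpha> - 1) 0 * (u/40)^DIM('n cvec)" using u by simp
  then show ?thesis using u by linarith
qed

definition "mu_total = measure M (UNIV :: 'n cvec set)"

lemma measure_le_mu_total: "measure M A \<le> mu_total"
  unfolding mu_total_def using finite_measure.bounded_measure[OF finite_measure_mu, of A] by simp

lemma p_oscillation_ln_bound:
  assumes B: "B \<in> calB" and xy: "x \<in> B" "y \<in> B"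
  shows "\<bar>p x - p y\<bar> * (- ln (measure M B)) \<le> osc_const"
proof -
  obtain u where u: "0 < u" "u \<le> 1" "(u/4) powr max (\<alpha> - 1) 0 * (u/40)^DIM('n cvec) \<le> measure M B"
    and d: "\<And>x y. x \<in> B \<Longrightarrow> y \<in> B \<Longrightarrow> pdist x y \<le> 30 * sqrt u"
    using calB_measure_diameter[OF B] by blast
  show ?thesis
  proof (cases "x = y")
    case True then show ?thesis using osc_const_nonneg by simp
  next
    case False
    have xyB: "x \<in> unitB" "y \<in> unitB" using xy calB_subset_unitB[OF B] by auto
    show ?thesis unfolding osc_const_def
      by (rule log_hoelder_scale_bound[OF c_log_nonneg u(1,2) pdist_pos[OF False] d[OF xy] _ calB_measure_pos[OF B] u(3) abs_ge_zero log_hoelder[OF xyB False]]) simp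
  qed
qed

lemma avg_exp_between:
  assumes E: "E \<in> sets borel" and mE: "measure M E > 0" and lo: "0 < lo" "lo \<le> hi"
    and AE: "AE y in M. y \<in> E \<longrightarrow> lo \<le> p y \<and> p y \<le> hi"
  shows "lo \<le> avg_exp \<alpha> p E" "avg_exp \<alpha> p E \<le> hi"
proof -
  define I where "I = (\<integral>y. indicator E y * (1 / p y) \<partial>M)"
  have int: "integrable M (\<lambda>y. indicator E y * (1 / p y))"
  proof (rule finite_measure.integrable_const_bound[OF finite_measure_mu, where B="1/lo"])
    show "AE y in M. norm (indicator E y * (1 / p y)) \<le> 1 / lo"
      using AE by eventually_elim (use lo in \<open>auto simp: indicator_def divide_simps\<close>)
  qed (use E in measurable)
  have intc: "integrable M (\<lambda>y. indicator E y * c)" for c :: real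
    by (rule finite_measure.integrable_const_bound[OF finite_measure_mu, where B="\<bar>c\<bar>"]) (use E in \<open>auto simp: indicator_def\<close>)
  have ic: "(\<integral>y. indicator E y * c \<partial>M) = measure M E * c" for c :: real
    by (subst integral_mult_left_zero) simp
  have I1: "measure M E * (1 / hi) \<le> I"
    unfolding I_def ic[symmetric]
    by (rule integral_mono_AE[OF intc int]) (use AE lo in \<open>auto elim!: eventually_mono simp: indicator_def divide_simps\<close>)
  have I2: "I \<le> measure M E * (1 / lo)"
    unfolding I_def ic[symmetric]
    by (rule integral_mono_AE[OF int intc]) (use AE lo in \<open>auto elim!: eventually_mono simp: indicator_def divide_simps\<close>)
  have hi: "hi > 0" using lo by simp
  have Ipos: "I > 0" using I1 mE hi by (smt (verit) divide_pos_pos mult_pos_pos)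
  have avg: "avg_exp \<alpha> p E = measure M E / I" unfolding avg_exp_def I_def[symmetric] by simp
  show "lo \<le> avg_exp \<alpha> p E" unfolding avg using I2 Ipos lo by (simp add: field_simps)
  show "avg_exp \<alpha> p E \<le> hi" unfolding avg using I1 Ipos hi by (simp add: field_simps)
qed

lemma avg_exp_range:
  assumes B: "B \<in> calB"
  shows "p_minus \<le> avg_exp \<alpha> p B" "avg_exp \<alpha> p B \<le> p_plus"
proof -
  have "AE y in M. y \<in> B \<longrightarrow> p_minus \<le> p y \<and> p y \<le> p_plus" using AE_p_bounds by eventually_elim auto
  then show "p_minus \<le> avg_exp \<alpha> p B" "avg_exp \<alpha> p B \<le> p_plus"
    using avg_exp_between[OF calB_borel[OF B] calB_measure_pos[OF B], of p_minus p_plus] p_minus_gt_1 p_minus_le_p_plus by auto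
qed

lemma avg_exp_oscillation:
  assumes B: "B \<in> calB" and z: "z \<in> B" and pz: "p_minus \<le> p z"
  shows "\<bar>avg_exp \<alpha> p B - p z\<bar> * (- ln (measure M B)) \<le> osc_const"
proof (cases "- ln (measure M B) \<le> 0")
  case True then show ?thesis using osc_const_nonneg by (smt (verit) mult_nonneg_nonpos abs_ge_zero)
next
  case False
  define L where "L = - ln (measure M B)"
  have L: "L > 0" using False by (simp add: L_def)
  define e where "e = osc_const / L"
  have e: "e \<ge> 0" using osc_const_nonneg L by (simp add: e_def)
  have osc': "\<bar>p y - p z\<bar> \<le> e" if "y \<in> B" for y
    using p_oscillation_ln_bound[OF B that z] L by (simp add: e_def L_def[symmetric] le_divide_eq)
  have AE: "AE y in M. y \<in> B \<longrightarrow> max p_minus (p z - e) \<le> p y \<and> p y \<le> p z + e"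
    using AE_p_minus_le
  proof eventually_elim
    fix y assume "p_minus \<le> p y"
    show "y \<in> B \<longrightarrow> max p_minus (p z - e) \<le> p y \<and> p y \<le> p z + e"
    proof
      assume "y \<in> B"
      then have "\<bar>p y - p z\<bar> \<le> e" by (rule osc')
      then show "max p_minus (p z - e) \<le> p y \<and> p y \<le> p z + e" using \<open>p_minus \<le> p y\<close> by (auto simp: abs_le_iff)
    qed
  qed
  have lohi: "0 < max p_minus (p z - e)" "max p_minus (p z - e) \<le> p z + e" using p_minus_gt_1 pz e by auto
  have "max p_minus (p z - e) \<le> avg_exp \<alpha> p B" "avg_exp \<alpha> p B \<le> p z + e"
    using avg_exp_between[OF calB_borel[OF B] calB_measure_pos[OF B] lohi AE] by auto
  then have "\<bar>avg_exp \<alpha> p B - p z\<bar> \<le> e" by (auto simp: abs_le_iff)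
  then show ?thesis using L by (simp add: e_def L_def[symmetric] le_divide_eq)
qed

abbreviation "w' \<equiv> dual_weight p w"
definition "young_const A = max (A powr (1 / (p_minus - 1))) (A powr (1 / (p_plus - 1)))"

lemma young_const_pos: "A > 0 \<Longrightarrow> young_const A > 0" by (simp add: young_const_def max_def)

lemma borel_measurable_w[measurable]: "w \<in> borel_measurable borel"
  using Bplus_w by (simp add: Bplus_def weight_def)

lemma borel_measurable_conj_exp[measurable]: "conj_exp p \<in> borel_measurable borel"
  unfolding conj_exp_def[abs_def] by measurable

lemma borel_measurable_w'[measurable]: "w' \<in> borel_measurable borel"
  unfolding dual_weight_def[abs_def] by measurable

lemma w'_eq: "p z > 1 \<Longrightarrow> w' z = epowr (w z) (- 1 / (p z - 1))"
  by (simp add: dual_weight_def conj_exp_def field_simps)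

lemma young_pointwise:
  assumes A: "A > 0" and pz: "p_minus \<le> p z" "p z \<le> p_plus"
  shows "1 \<le> ennreal (1 / A) * w z + ennreal (young_const A) * w' z"
proof -
  have p1: "p z > 1" using pz p_minus_gt_1 by simp
  define s where "s = 1 / (p z - 1)"
  have s: "s > 0" "1 / (p_plus - 1) \<le> s" "s \<le> 1 / (p_minus - 1)" using pz p1 p_minus_gt_1 by (auto simp: s_def divide_simps)
  have wdz: "w' z = epowr (w z) (- s)" using w'_eq[OF p1] by (simp add: s_def)
  show ?thesis
  proof (cases "w z" rule: ennreal_zero_top_pos_cases)
    case 1
    then have "w' z = top" using wdz s by (simp add: epowr_zero_neg)
    then show ?thesis using young_const_pos[OF A] by (simp add: ennreal_mult_top)
  next
    case 2 then show ?thesis using A by (simp add: ennreal_mult_top)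
  next
    case (3 x)
    show ?thesis
    proof (cases "x \<ge> A")
      case True
      then have "1 \<le> ennreal (1 / A) * w z" using 3 A by (simp add: ennreal_mult''[symmetric] field_simps)
      then show ?thesis by (rule order_trans) simp
    next
      case False
      have "1 \<le> (A / x) powr s" using False 3 s by (intro ge_one_powr_ge_zero) auto
      also have "(A / x) powr s = A powr s * x powr (- s)" using 3 A by (simp add: powr_divide powr_minus_divide)
      also have "\<dots> \<le> young_const A * x powr (- s)"
        unfolding young_const_def using powr_between(1)[OF A s(2) s(3)] by (intro mult_right_mono) (auto simp: max.commute)
      finally have "1 \<le> ennreal (young_const A) * w' z" using 3 wdz by (simp add: epowr_ennreal ennreal_mult''[symmetric])
      then show ?thesis by (rule order_trans) simp
    qed
  qed
qed

lemma young_measure_bound: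
  assumes E: "E \<in> sets borel" and A: "A > 0"
  shows "emeasure M E \<le> ennreal (1 / A) * wmeas \<alpha> w E + ennreal (young_const A) * wmeas \<alpha> w' E"
proof -
  have "emeasure M E = (\<integral>\<^sup>+z. indicator E z \<partial>M)" using E by simp
  also have "\<dots> \<le> (\<integral>\<^sup>+z. (ennreal (1 / A) * w z + ennreal (young_const A) * w' z) * indicator E z \<partial>M)"
  proof (rule nn_integral_mono_AE)
    show "AE z in M. indicator E z \<le> (ennreal (1 / A) * w z + ennreal (young_const A) * w' z) * indicator E z"
      using AE_p_bounds by eventually_elim (use young_pointwise[OF A] in \<open>auto simp: indicator_def\<close>)
  qed
  also have "\<dots> = (\<integral>\<^sup>+z. ennreal (1 / A) * (w z * indicator E z) + ennreal (young_const A) * (w' z * indicator E z) \<partial>M)"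
    by (intro nn_integral_cong) (simp add: algebra_simps)
  also have "\<dots> = ennreal (1 / A) * wmeas \<alpha> w E + ennreal (young_const A) * wmeas \<alpha> w' E"
    unfolding wmeas_def using E by (simp add: nn_integral_add nn_integral_cmult)
  finally show ?thesis .
qed

lemma young_measure_bound_real:
  assumes E: "E \<in> sets borel" and A: "A > 0" and a: "wmeas \<alpha> w E = ennreal a" "a \<ge> 0"
    and b: "wmeas \<alpha> w' E = ennreal b" "b \<ge> 0"
  shows "measure M E \<le> a / A + young_const A * b"
proof -
  have "ennreal (measure M E) \<le> ennreal (1 / A) * ennreal a + ennreal (young_const A) * ennreal b"
    using young_measure_bound[OF E A] unfolding a b emeasure_mu_eq_measure .
  also have "\<dots> = ennreal (a / A) + ennreal (young_const A * b)"
    using A a b young_const_pos[OF A] by (simp add: ennreal_mult''[symmetric])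
  also have "\<dots> = ennreal (a / A + young_const A * b)"
    by (rule ennreal_plus[symmetric]) (use A a b young_const_pos[OF A] in auto)
  finally have h: "ennreal (measure M E) \<le> ennreal (a / A + young_const A * b)" .
  have nn: "0 \<le> a / A + young_const A * b" using A a b young_const_pos[OF A] by simp
  show ?thesis using h ennreal_le_iff[OF nn] by blast
qed

definition "Bchar_sup = (SUP B\<in>calB. Bchar \<alpha> p w B)"

lemma Bchar_sup_finite: "Bchar_sup < \<infinity>" using Bplus_w by (simp add: Bplus_def Bchar_sup_def)

lemma Bchar_le_sup: "B \<in> calB \<Longrightarrow> Bchar \<alpha> p w B \<le> Bchar_sup"
  unfolding Bchar_sup_def by (rule SUP_upper)

lemma luxemburg_integrand_w:
  assumes t: "t > 0"
  shows "AE z in M. epowr (epowr (w z) (-1) * indicator E z / ennreal t) (conj_exp p z / p z)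
     = indicator E z * w' z * ennreal (t powr (-1 / (p z - 1)))"
  using AE_p_bounds
proof eventually_elim
  case (elim z)
  then have p1: "p z > 1" using p_minus_gt_1 by simp
  have "conj_exp p z / p z = 1 / (p z - 1)" using p1 by (simp add: conj_exp_def)
  moreover have "epowr (epowr (w z) (-1)) (1 / (p z - 1)) = w' z"
    unfolding epowr_epowr w'_eq[OF p1] by simp
  moreover have "epowr (epowr (w z) (-1) * indicator E z / ennreal t) (1 / (p z - 1))
      = indicator E z * epowr (epowr (w z) (-1)) (1 / (p z - 1)) * ennreal (t powr (- (1 / (p z - 1))))"
    by (rule epowr_indicator_divide) (use p1 t in \<open>auto simp: indicator_def\<close>)
  ultimately show ?case by simp
qed

lemma luxemburg_integrand_w':
  assumes t: "t > 0"
  shows "AE z in M. epowr (epowr (w' z) (-1) * indicator E z / ennreal t) (conj_exp (conj_exp p) z / conj_exp p z)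
     = indicator E z * w z * ennreal (t powr (-1 / (1 / (p z - 1))))"
  using AE_p_bounds
proof eventually_elim
  case (elim z)
  then have p1: "p z > 1" using p_minus_gt_1 by simp
  have "conj_exp (conj_exp p) z / conj_exp p z = p z - 1" using p1 by (simp add: conj_exp_def field_simps)
  moreover have "epowr (epowr (w' z) (-1)) (p z - 1) = w z"
  proof -
    have "- 1 / (p z - 1) * - 1 * (p z - 1) = 1" using p1 by simp
    then show ?thesis unfolding epowr_epowr w'_eq[OF p1] by (simp add: epowr_1_right)
  qed
  moreover have "epowr (epowr (w' z) (-1) * indicator E z / ennreal t) (p z - 1)
      = indicator E z * epowr (epowr (w' z) (-1)) (p z - 1) * ennreal (t powr (- (p z - 1)))"
    by (rule epowr_indicator_divide) (use p1 t in \<open>auto simp: indicator_def\<close>)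
  ultimately show ?case by simp
qed

lemma measure_powr_avg_exp_pos: "B \<in> calB \<Longrightarrow> ennreal (measure M B powr (- avg_exp \<alpha> p B)) > 0"
  using calB_measure_pos[of B] by simp

lemma wmeas_w'_finite:
  assumes B: "B \<in> calB" and Wp: "wmeas \<alpha> w B > 0"
  shows "wmeas \<alpha> w' B < \<infinity>"
proof -
  define v where "v = vnorm \<alpha> (\<lambda>z. conj_exp p z / p z) (\<lambda>z. epowr (w z) (-1) * indicator B z)"
  have "Bchar \<alpha> p w B < \<infinity>" using Bchar_le_sup[OF B] Bchar_sup_finite by (rule le_less_trans)
  then have "v < \<infinity>" using measure_powr_avg_exp_pos[OF B] Wp unfolding Bchar_def v_def[symmetric]
    by (auto simp: less_top[symmetric] ennreal_mult_eq_top_iff)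
  then obtain t where t: "t > 0" and le: "(\<integral>\<^sup>+z. epowr (epowr (w z) (-1) * indicator B z / ennreal t) (conj_exp p z / p z) \<partial>M) \<le> 1"
    unfolding v_def vnorm_def by (auto simp: Inf_less_iff)
  define kmin where "kmin = min (t powr (-1 / (p_minus - 1))) (t powr (-1 / (p_plus - 1)))"
  have kmin: "kmin > 0" using t by (simp add: kmin_def)
  have "ennreal kmin * wmeas \<alpha> w' B = (\<integral>\<^sup>+z. w' z * indicator B z * ennreal kmin \<partial>M)"
  proof -
    have meas: "(\<lambda>z. w' z * indicator B z) \<in> borel_measurable M"
      by (intro borel_measurable_times_ennreal borel_measurable_indicator) (auto simp: calB_borel[OF B])
    show ?thesis unfolding wmeas_def by (subst nn_integral_multc[OF meas]) (simp add: mult.commute)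
  qed
  also have "\<dots> \<le> (\<integral>\<^sup>+z. indicator B z * w' z * ennreal (t powr (-1 / (p z - 1))) \<partial>M)"
  proof (rule nn_integral_mono_AE)
    show "AE z in M. w' z * indicator B z * ennreal kmin \<le> indicator B z * w' z * ennreal (t powr (-1 / (p z - 1)))"
      using AE_p_bounds
    proof eventually_elim
      fix z assume h: "z \<in> unitB \<and> p_minus \<le> p z \<and> p z \<le> p_plus"
      have p1: "p z > 1" using h p_minus_gt_1 by simp
      have "-1 / (p_minus - 1) \<le> -1 / (p z - 1)" "-1 / (p z - 1) \<le> -1 / (p_plus - 1)"
        using h p1 p_minus_gt_1 by (auto simp: divide_simps)
      then have "kmin \<le> t powr (-1 / (p z - 1))" unfolding kmin_def
        using powr_between(2)[OF t, of "-1 / (p_minus - 1)" "-1 / (p z - 1)" "-1 / (p_plus - 1)"] by (simp add: min.commute)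
      then have k: "ennreal kmin \<le> ennreal (t powr (-1 / (p z - 1)))" by (rule ennreal_leI)
      show "w' z * indicator B z * ennreal kmin \<le> indicator B z * w' z * ennreal (t powr (-1 / (p z - 1)))"
      proof (cases "z \<in> B")
        case True then show ?thesis using mult_left_mono[OF k, of "w' z"] by simp
      qed simp
    qed
  qed
  also have "\<dots> = (\<integral>\<^sup>+z. epowr (epowr (w z) (-1) * indicator B z / ennreal t) (conj_exp p z / p z) \<partial>M)"
    by (rule nn_integral_cong_AE) (rule eventually_mono[OF luxemburg_integrand_w[OF t, of B]], simp)
  also have "\<dots> \<le> 1" by (rule le)
  finally have "ennreal kmin * wmeas \<alpha> w' B \<le> 1" .
  then show ?thesis using kmin by (cases "wmeas \<alpha> w' B") (auto simp: ennreal_mult_top top_unique)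
qed

lemma wmeas_w'_unitB_finite: "wmeas \<alpha> w' unitB < \<infinity>"
  using wmeas_w'_finite[OF unitB_in_calB wmeas_w_unitB_pos] .

lemma wmeas_w'_unitB_pos: "wmeas \<alpha> w' unitB > 0"
proof (rule ccontr)
  assume "\<not> ?thesis"
  then have z: "wmeas \<alpha> w' unitB = 0" by simp
  define K0 where "K0 = cball (0::'n cvec) (1/2)"
  have K0s: "K0 \<in> sets borel" "K0 \<subseteq> unitB" "compact K0" by (auto simp: K0_def unitB_def)
  have "wmeas \<alpha> w K0 < \<infinity>" using Bplus_w K0s unfolding Bplus_def weight_def wmeas_def by auto
  then obtain a where a: "wmeas \<alpha> w K0 = ennreal a" "a \<ge> 0" by (cases "wmeas \<alpha> w K0") auto
  have b: "wmeas \<alpha> w' K0 = ennreal 0" using wmeas_mono[OF K0s(2), where \<alpha>=\<alpha> and v=w'] z by simp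
  define x where "x = (1/2::real) powr (max (\<alpha> - 1) 0) * (1/2) ^ DIM('n cvec)"
  have "ennreal x \<le> emeasure M K0" unfolding x_def
    by (rule emeasure_mu_alpha_ball_lower[where c=0 and \<rho>="1/2"]) (auto simp: K0_def)
  then have "x \<le> measure M K0" unfolding emeasure_mu_eq_measure using ennreal_le_iff[OF measure_nonneg] by blast
  moreover have "x > 0" by (simp add: x_def)
  ultimately have mpos: "measure M K0 > 0" by linarith
  define A where "A = 2 * (a + 1) / measure M K0"
  have A: "A > 0" using a mpos by (simp add: A_def)
  have "measure M K0 \<le> a / A + young_const A * 0" by (rule young_measure_bound_real[OF K0s(1) A a b]) simp
  also have "\<dots> = measure M K0 * (a / (2 * (a + 1)))" using mpos a by (simp add: A_def field_simps)
  also have "\<dots> < measure M K0 * 1" using mpos a by (intro mult_strict_left_mono) (auto simp: field_simps)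
  finally show False by simp
qed

lemma wmeas_w_unitB_finite: "wmeas \<alpha> w unitB < \<infinity>"
proof (rule ccontr)
  \<comment> \<open>Otherwise the finite characteristic forces \<open>\<parallel>w\<^sup>-\<^sup>1\<chi>\<^sub>\<bbbB>\<parallel> = 0\<close>, but that norm is
    bounded below by a power of \<open>w'(\<bbbB>) > 0\<close>.\<close>
  assume "\<not> ?thesis"
  then have top: "wmeas \<alpha> w unitB = \<infinity>" using less_top[of "wmeas \<alpha> w unitB"] by simp
  define v where "v = vnorm \<alpha> (\<lambda>z. conj_exp p z / p z) (\<lambda>z. epowr (w z) (-1) * indicator unitB z)"
  have "Bchar \<alpha> p w unitB < \<infinity>" using Bchar_le_sup[OF unitB_in_calB] Bchar_sup_finite by (rule le_less_trans)
  then have v0: "v = 0" using measure_powr_avg_exp_pos[OF unitB_in_calB] top unfolding Bchar_def v_def[symmetric]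
    by (cases "v = 0") (auto simp: ennreal_mult_eq_top_iff ennreal_top_mult)
  obtain X where X: "wmeas \<alpha> w' unitB = ennreal X" "X > 0"
    using wmeas_w'_unitB_finite wmeas_w'_unitB_pos by (cases "wmeas \<alpha> w' unitB") auto
  define H where "H = (1 + p_plus) * \<bar>ln X\<bar> / (p_plus - 1)"
  have "ennreal (exp (1 * ln X - (p_plus - 1) * H)) \<le> v"
    unfolding v_def vnorm_def
  proof (rule luxemburg_norm_ge_exp[where v=w' and q="\<lambda>z. p z - 1" and E=unitB])
    show "(\<integral>\<^sup>+z. w' z * indicator unitB z \<partial>M) = ennreal X" using X by (simp add: wmeas_def)
    show "AE z in M. z \<in> unitB \<longrightarrow> 0 < p z - 1 \<and> p z - 1 \<le> p_plus - 1 \<and> \<bar>(1 - (p z - 1)) * ln X\<bar> \<le> (p_plus - 1) * H"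
      using AE_p_bounds
    proof eventually_elim
      fix z assume h: "z \<in> unitB \<and> p_minus \<le> p z \<and> p z \<le> p_plus"
      have "\<bar>1 - (p z - 1)\<bar> \<le> 1 + p_plus" using h p_minus_gt_1 by (auto simp: abs_le_iff)
      then have "\<bar>(1 - (p z - 1)) * ln X\<bar> \<le> (1 + p_plus) * \<bar>ln X\<bar>" by (simp add: abs_mult mult_right_mono)
      then show "z \<in> unitB \<longrightarrow> 0 < p z - 1 \<and> p z - 1 \<le> p_plus - 1 \<and> \<bar>(1 - (p z - 1)) * ln X\<bar> \<le> (p_plus - 1) * H"
        using h p_minus_gt_1 p_plus_gt_1 by (simp add: H_def)
    qed
    show "\<And>t. 0 < t \<Longrightarrow> AE z in M. epowr (epowr (w z) (-1) * indicator unitB z / ennreal t) (conj_exp p z / p z) =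
          indicator unitB z * w' z * ennreal (t powr (-1 / (p z - 1)))"
      by (rule luxemburg_integrand_w)
  qed (use X p_plus_gt_1 in auto)
  moreover have "ennreal (exp (1 * ln X - (p_plus - 1) * H)) > 0" by simp
  ultimately show False using v0 by simp
qed

definition "w_total = enn2real (wmeas \<alpha> w unitB)"
definition "w'_total = enn2real (wmeas \<alpha> w' unitB)"

lemma w_total: "wmeas \<alpha> w unitB = ennreal w_total" "w_total > 0"
  using wmeas_w_unitB_finite wmeas_w_unitB_pos unfolding w_total_def by (cases "wmeas \<alpha> w unitB"; simp)+

lemma w'_total: "wmeas \<alpha> w' unitB = ennreal w'_total" "w'_total > 0"
  using wmeas_w'_unitB_finite wmeas_w'_unitB_pos unfolding w'_total_def by (cases "wmeas \<alpha> w' unitB"; simp)+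


lemma wmeas_w_calB_real:
  assumes "B \<in> calB"
  shows "wmeas \<alpha> w B = ennreal (enn2real (wmeas \<alpha> w B))" "enn2real (wmeas \<alpha> w B) \<le> w_total"
  using ennreal_le_imp_real[of "wmeas \<alpha> w B" w_total] w_total
    wmeas_mono[OF calB_subset_unitB[OF assms], where \<alpha>=\<alpha> and v=w] by simp_all

lemma wmeas_w'_calB_real:
  assumes "B \<in> calB"
  shows "wmeas \<alpha> w' B = ennreal (enn2real (wmeas \<alpha> w' B))" "enn2real (wmeas \<alpha> w' B) \<le> w'_total"
  using ennreal_le_imp_real[of "wmeas \<alpha> w' B" w'_total] w'_total
    wmeas_mono[OF calB_subset_unitB[OF assms], where \<alpha>=\<alpha> and v=w'] by simp_all

lemma ln_wmeas_w'_lower: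
  assumes B: "B \<in> calB"
  defines "m \<equiv> measure M B" and "a \<equiv> enn2real (wmeas \<alpha> w B)" and "b \<equiv> enn2real (wmeas \<alpha> w' B)"
  shows "b > 0" "ln b \<ge> ln m - ln 2 - (ln 2 + ln (w_total + mu_total) - ln m) / (p_minus - 1)"
proof -
  have m: "m > 0" "m \<le> mu_total" using calB_measure_pos[OF B] measure_le_mu_total[of B] by (auto simp: m_def)
  have a: "wmeas \<alpha> w B = ennreal a" "0 \<le> a" "a \<le> w_total" using wmeas_w_calB_real[OF B] by (auto simp: a_def)
  have b: "wmeas \<alpha> w' B = ennreal b" "0 \<le> b" using wmeas_w'_calB_real[OF B] by (auto simp: b_def)
  \<comment> \<open>This choice of \<open>A\<close> makes the \<open>w\<close>-term of Young's bound at most \<open>m/2\<close>.\<close>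
  define A where "A = 2 * (w_total + m) / m"
  have A2: "A \<ge> 2" using m w_total by (simp add: A_def field_simps)
  have KA: "young_const A = A powr (1 / (p_minus - 1))"
  proof -
    have "A powr (1 / (p_plus - 1)) \<le> A powr (1 / (p_minus - 1))"
      using A2 p_minus_le_p_plus p_minus_gt_1 by (intro powr_mono) (auto simp: divide_simps)
    then show ?thesis by (simp add: young_const_def max_def)
  qed
  have y: "m \<le> a / A + young_const A * b" unfolding m_def using young_measure_bound_real[OF calB_borel[OF B] _ a(1,2) b] A2 by simp
  have "a / A \<le> w_total / A" using a A2 by (simp add: divide_right_mono)
  also have "w_total / A = m * (w_total / (2 * (w_total + m)))" using m w_total by (simp add: A_def field_simps)
  also have "\<dots> \<le> m * (1/2)" using m w_total by (intro mult_left_mono) (auto simp: field_simps)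
  finally have h: "a / A \<le> m * (1/2)" .
  have "m / 2 \<le> young_const A * b" using y h by linarith
  moreover have KApos: "young_const A > 0" using young_const_pos A2 by simp
  ultimately have bl: "m / (2 * young_const A) \<le> b" by (simp add: field_simps)
  then show bpos: "b > 0" using m KApos by (smt (verit) divide_pos_pos mult_pos_pos)
  have "ln (m / (2 * young_const A)) \<le> ln b" using bl m KApos bpos by (subst ln_le_cancel_iff) auto
  moreover have "ln (m / (2 * young_const A)) = ln m - ln 2 - ln A / (p_minus - 1)"
    using m KApos A2 by (simp add: ln_div ln_mult KA ln_powr)
  moreover have "ln A \<le> ln 2 + ln (w_total + mu_total) - ln m"
  proof -
    have "ln A = ln (2 * (w_total + m)) - ln m" unfolding A_def using m w_total by (subst ln_div) auto
    also have "ln (2 * (w_total + m)) = ln 2 + ln (w_total + m)" using m w_total by (subst ln_mult) auto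
    finally have "ln A = ln 2 + ln (w_total + m) - ln m" .
    also have "ln (w_total + m) \<le> ln (w_total + mu_total)" using m w_total by (subst ln_le_cancel_iff) auto
    finally show ?thesis by simp
  qed
  moreover have "ln A / (p_minus - 1) \<le> (ln 2 + ln (w_total + mu_total) - ln m) / (p_minus - 1)"
    using calculation(3) p_minus_gt_1 by (intro divide_right_mono) auto
  ultimately show "ln b \<ge> ln m - ln 2 - (ln 2 + ln (w_total + mu_total) - ln m) / (p_minus - 1)" by linarith
qed

lemma ln_wmeas_w_lower:
  assumes B: "B \<in> calB"
  defines "m \<equiv> measure M B" and "a \<equiv> enn2real (wmeas \<alpha> w B)" and "b \<equiv> enn2real (wmeas \<alpha> w' B)"
  shows "a > 0" "ln a \<ge> (p_plus - 1) * (ln m - ln 2 - ln (w'_total + mu_total)) + ln m - ln 2"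
proof -
  have m: "m > 0" "m \<le> mu_total" using calB_measure_pos[OF B] measure_le_mu_total[of B] by (auto simp: m_def)
  have a: "wmeas \<alpha> w B = ennreal a" "0 \<le> a" using wmeas_w_calB_real[OF B] by (auto simp: a_def)
  have b: "wmeas \<alpha> w' B = ennreal b" "0 \<le> b" "b \<le> w'_total" using wmeas_w'_calB_real[OF B] by (auto simp: b_def)
  \<comment> \<open>This choice of \<open>A\<close> makes the \<open>w'\<close>-term of Young's bound at most \<open>m/2\<close>.\<close>
  define \<beta> where "\<beta> = m / (2 * (w'_total + m))"
  have \<beta>: "0 < \<beta>" "\<beta> < 1" using m w'_total by (auto simp: \<beta>_def field_simps)
  define A where "A = \<beta> powr (p_plus - 1)"
  have A: "0 < A" "A < 1" using \<beta> p_plus_gt_1 by (auto simp: A_def powr_less_one powr01_less_one)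
  have KA: "young_const A = \<beta>"
  proof -
    have "A powr (1 / (p_minus - 1)) \<le> A powr (1 / (p_plus - 1))"
      using A p_minus_le_p_plus p_minus_gt_1 by (intro powr_mono') (auto simp: divide_simps)
    moreover have "A powr (1 / (p_plus - 1)) = \<beta>" using \<beta> p_plus_gt_1 by (simp add: A_def powr_powr)
    ultimately show ?thesis by (simp add: young_const_def max_def)
  qed
  have y: "m \<le> a / A + young_const A * b" unfolding m_def using young_measure_bound_real[OF calB_borel[OF B] A(1) a(1,2) b(1,2)] by simp
  have "young_const A * b \<le> \<beta> * w'_total" using b \<beta> by (simp add: KA mult_left_mono)
  also have "\<beta> * w'_total = m * (w'_total / (2 * (w'_total + m)))" by (simp add: \<beta>_def)
  also have "\<dots> \<le> m * (1/2)" using m w'_total by (intro mult_left_mono) (auto simp: field_simps)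
  finally have h: "young_const A * b \<le> m * (1/2)" .
  have "m / 2 \<le> a / A" using y h by linarith
  then have al: "A * m / 2 \<le> a" using A by (simp add: field_simps)
  then show apos: "a > 0" using A m by (smt (verit) divide_pos_pos mult_pos_pos)
  have "ln (A * m / 2) \<le> ln a" using al A m apos by (subst ln_le_cancel_iff) auto
  moreover have "ln (A * m / 2) = (p_plus - 1) * ln \<beta> + ln m - ln 2"
    using A m \<beta> by (simp add: ln_div ln_mult A_def ln_powr)
  moreover have "ln \<beta> \<ge> ln m - ln 2 - ln (w'_total + mu_total)"
  proof -
    have "ln \<beta> = ln m - ln (2 * (w'_total + m))" unfolding \<beta>_def using m w'_total by (subst ln_div) auto
    also have "ln (2 * (w'_total + m)) = ln 2 + ln (w'_total + m)" using m w'_total by (subst ln_mult) auto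
    finally have "ln \<beta> = ln m - ln 2 - ln (w'_total + m)" by simp
    moreover have "ln (w'_total + m) \<le> ln (w'_total + mu_total)" using m w'_total by (subst ln_le_cancel_iff) auto
    ultimately show ?thesis by simp
  qed
  moreover have "(p_plus - 1) * (ln m - ln 2 - ln (w'_total + mu_total)) \<le> (p_plus - 1) * ln \<beta>"
    using calculation(3) p_plus_gt_1 by (intro mult_left_mono) auto
  ultimately show "ln a \<ge> (p_plus - 1) * (ln m - ln 2 - ln (w'_total + mu_total)) + ln m - ln 2" by linarith
qed

definition "ln_const = (\<bar>ln w_total\<bar> + ln 2 + (p_plus - 1) * (ln 2 + \<bar>ln (w'_total + mu_total)\<bar>)) + (\<bar>ln w'_total\<bar> + ln 2 + (ln 2 + \<bar>ln (w_total + mu_total)\<bar>) / (p_minus - 1))"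
definition "ln_slope = p_plus + 1 + 1 / (p_minus - 1)"

lemma ln_const_slope_nonneg: "ln_const \<ge> 0" "ln_slope \<ge> 0"
  using p_plus_gt_1 p_minus_gt_1 by (auto simp: ln_const_def ln_slope_def intro!: add_nonneg_nonneg mult_nonneg_nonneg divide_nonneg_pos)

lemma abs_ln_wmeas_w_le:
  assumes B: "B \<in> calB"
  shows "\<bar>ln (enn2real (wmeas \<alpha> w B))\<bar> \<le> ln_const + ln_slope * \<bar>ln (measure M B)\<bar>"
proof -
  define a where "a = enn2real (wmeas \<alpha> w B)"
  define m where "m = measure M B"
  have apos: "a > 0" using ln_wmeas_w_lower(1)[OF B] by (simp add: a_def)
  have ale: "a \<le> w_total" using wmeas_w_calB_real[OF B] by (simp add: a_def)
  have m: "m > 0" using calB_measure_pos[OF B] by (simp add: m_def)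
  have lo: "ln a \<ge> (p_plus - 1) * (ln m - ln 2 - ln (w'_total + mu_total)) + ln m - ln 2"
    using ln_wmeas_w_lower(2)[OF B] by (simp add: a_def m_def)
  have up: "ln a \<le> ln w_total" using apos ale w_total by (subst ln_le_cancel_iff) auto
  have t1: "(p_plus - 1) * (- (ln m - ln 2 - ln (w'_total + mu_total))) \<le> (p_plus - 1) * (\<bar>ln m\<bar> + ln 2 + \<bar>ln (w'_total + mu_total)\<bar>)"
    using p_plus_gt_1 by (intro mult_left_mono) auto
  have t2: "(p_plus - 1) * \<bar>ln m\<bar> + \<bar>ln m\<bar> = p_plus * \<bar>ln m\<bar>" by (simp add: algebra_simps)
  have t3: "p_plus * \<bar>ln m\<bar> \<le> ln_slope * \<bar>ln m\<bar>" using p_minus_gt_1 by (intro mult_right_mono) (auto simp: ln_slope_def)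
  have t4: "0 \<le> \<bar>ln w'_total\<bar> + ln 2 + (ln 2 + \<bar>ln (w_total + mu_total)\<bar>) / (p_minus - 1)" using p_minus_gt_1 by (auto intro!: add_nonneg_nonneg divide_nonneg_pos)
  have t5: "0 \<le> (p_plus - 1) * (ln 2 + \<bar>ln (w'_total + mu_total)\<bar>)" using p_plus_gt_1 by simp
  have t6: "0 \<le> ln_slope * \<bar>ln m\<bar>" using ln_const_slope_nonneg by simp
  have "- ln a \<le> ln_const + ln_slope * \<bar>ln m\<bar>"
    using lo t1 t2 t3 t4 unfolding ln_const_def by (simp add: algebra_simps) linarith
  moreover have "ln a \<le> ln_const + ln_slope * \<bar>ln m\<bar>"
    using up t4 t5 t6 abs_ge_self[of "ln w_total"] ln_ge_zero[of 2] unfolding ln_const_def by linarith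
  ultimately show ?thesis unfolding a_def[symmetric] m_def[symmetric] by linarith
qed

lemma abs_ln_wmeas_w'_le:
  assumes B: "B \<in> calB"
  shows "\<bar>ln (enn2real (wmeas \<alpha> w' B))\<bar> \<le> ln_const + ln_slope * \<bar>ln (measure M B)\<bar>"
proof -
  define b where "b = enn2real (wmeas \<alpha> w' B)"
  define m where "m = measure M B"
  have bpos: "b > 0" using ln_wmeas_w'_lower(1)[OF B] by (simp add: b_def)
  have ble: "b \<le> w'_total" using wmeas_w'_calB_real[OF B] by (simp add: b_def)
  have lo: "ln b \<ge> ln m - ln 2 - (ln 2 + ln (w_total + mu_total) - ln m) / (p_minus - 1)"
    using ln_wmeas_w'_lower(2)[OF B] by (simp add: b_def m_def)
  have up: "ln b \<le> ln w'_total" using bpos ble w'_total by (subst ln_le_cancel_iff) auto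
  have d: "p_minus - 1 > 0" using p_minus_gt_1 by simp
  have t1: "(ln 2 + ln (w_total + mu_total) - ln m) / (p_minus - 1) \<le> (ln 2 + \<bar>ln (w_total + mu_total)\<bar>) / (p_minus - 1) + (1 / (p_minus - 1)) * \<bar>ln m\<bar>"
  proof -
    have "(ln 2 + ln (w_total + mu_total) - ln m) / (p_minus - 1) \<le> (ln 2 + \<bar>ln (w_total + mu_total)\<bar> + \<bar>ln m\<bar>) / (p_minus - 1)"
      using d by (intro divide_right_mono) auto
    also have "\<dots> = (ln 2 + \<bar>ln (w_total + mu_total)\<bar>) / (p_minus - 1) + (1 / (p_minus - 1)) * \<bar>ln m\<bar>"
      by (simp add: add_divide_distrib)
    finally show ?thesis .
  qed
  have t2: "\<bar>ln m\<bar> + (1 / (p_minus - 1)) * \<bar>ln m\<bar> \<le> ln_slope * \<bar>ln m\<bar>"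
  proof -
    have "\<bar>ln m\<bar> + (1 / (p_minus - 1)) * \<bar>ln m\<bar> = (1 + 1 / (p_minus - 1)) * \<bar>ln m\<bar>" by (simp add: algebra_simps)
    also have "\<dots> \<le> ln_slope * \<bar>ln m\<bar>" using p_minus_le_p_plus p_minus_gt_1 by (intro mult_right_mono) (auto simp: ln_slope_def)
    finally show ?thesis .
  qed
  have t4: "0 \<le> (p_plus - 1) * (ln 2 + \<bar>ln (w'_total + mu_total)\<bar>)" using p_plus_gt_1 by simp
  have t5: "0 \<le> \<bar>ln w_total\<bar>" by simp
  have t6: "0 \<le> ln_slope * \<bar>ln m\<bar>" using ln_const_slope_nonneg by simp
  have t7: "0 \<le> (ln 2 + \<bar>ln (w_total + mu_total)\<bar>) / (p_minus - 1)" using d by simp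
  have "- ln b \<le> ln_const + ln_slope * \<bar>ln m\<bar>"
    using lo t1 t2 t4 t5 abs_ge_self[of "- ln m"] ln_ge_zero[of 2] unfolding ln_const_def by linarith
  moreover have "ln b \<le> ln_const + ln_slope * \<bar>ln m\<bar>"
    using up t4 t5 t6 t7 abs_ge_self[of "ln w'_total"] ln_ge_zero[of 2] unfolding ln_const_def by linarith
  ultimately show ?thesis unfolding b_def[symmetric] m_def[symmetric] by linarith
qed

lemma avg_exp_oscillation_abs:
  assumes B: "B \<in> calB" and z: "z \<in> B" and pz: "p_minus \<le> p z"
  shows "\<bar>avg_exp \<alpha> p B - p z\<bar> * \<bar>ln (measure M B)\<bar> \<le> osc_const + (p_plus - p_minus) * \<bar>ln mu_total\<bar>"
proof (cases "measure M B \<le> 1")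
  case True
  then have "\<bar>ln (measure M B)\<bar> = - ln (measure M B)" using calB_measure_pos[OF B] by simp
  then have "\<bar>avg_exp \<alpha> p B - p z\<bar> * \<bar>ln (measure M B)\<bar> \<le> osc_const" using avg_exp_oscillation[OF B z pz] by simp
  moreover have "0 \<le> (p_plus - p_minus) * \<bar>ln mu_total\<bar>" using p_minus_le_p_plus by simp
  ultimately show ?thesis by linarith
next
  case False
  have m: "1 < measure M B" "measure M B \<le> mu_total" using False measure_le_mu_total[of B] by auto
  have l: "\<bar>ln (measure M B)\<bar> \<le> \<bar>ln mu_total\<bar>" using m by auto
  have pzP: "p z \<le> p_plus" using p_le_p_plus calB_subset_unitB[OF B] z by auto
  have "\<bar>avg_exp \<alpha> p B - p z\<bar> \<le> p_plus - p_minus" using avg_exp_range[OF B] pz pzP by (auto simp: abs_le_iff)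
  then have "\<bar>avg_exp \<alpha> p B - p z\<bar> * \<bar>ln (measure M B)\<bar> \<le> (p_plus - p_minus) * \<bar>ln mu_total\<bar>"
    using l by (intro mult_mono) auto
  then show ?thesis using osc_const_nonneg by linarith
qed

definition "dev_const = (p_plus - p_minus) * ln_const + ln_slope * (osc_const + (p_plus - p_minus) * \<bar>ln mu_total\<bar>)"

lemma avg_exp_deviation_ln_le:
  assumes B: "B \<in> calB" and z: "z \<in> B" and pz: "p_minus \<le> p z"
    and X: "\<bar>ln X\<bar> \<le> ln_const + ln_slope * \<bar>ln (measure M B)\<bar>"
  shows "\<bar>(avg_exp \<alpha> p B - p z) * ln X\<bar> \<le> dev_const"
proof -
  define d where "d = \<bar>avg_exp \<alpha> p B - p z\<bar>"
  have pzP: "p z \<le> p_plus" using p_le_p_plus calB_subset_unitB[OF B] z by auto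
  have d: "0 \<le> d" "d \<le> p_plus - p_minus" using avg_exp_range[OF B] pz pzP by (auto simp: abs_le_iff d_def)
  have "\<bar>(avg_exp \<alpha> p B - p z) * ln X\<bar> = d * \<bar>ln X\<bar>" by (simp add: abs_mult d_def)
  also have "\<dots> \<le> d * (ln_const + ln_slope * \<bar>ln (measure M B)\<bar>)" using d X by (intro mult_left_mono) auto
  also have "\<dots> = d * ln_const + ln_slope * (d * \<bar>ln (measure M B)\<bar>)" by (simp add: algebra_simps)
  also have "\<dots> \<le> (p_plus - p_minus) * ln_const + ln_slope * (osc_const + (p_plus - p_minus) * \<bar>ln mu_total\<bar>)"
    using d ln_const_slope_nonneg avg_exp_oscillation_abs[OF B z pz] unfolding d_def[symmetric]
    by (intro add_mono mult_right_mono mult_left_mono) auto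
  finally show ?thesis by (simp add: dev_const_def)
qed

lemma dev_const_nonneg: "dev_const \<ge> 0"
  unfolding dev_const_def using ln_const_slope_nonneg p_minus_le_p_plus osc_const_nonneg by (intro add_nonneg_nonneg mult_nonneg_nonneg) auto

lemma avg_exp_conj_exp:
  assumes B: "B \<in> calB"
  shows "avg_exp \<alpha> (conj_exp p) B = avg_exp \<alpha> p B / (avg_exp \<alpha> p B - 1)"
proof -
  define m where "m = measure M B"
  define I where "I = (\<integral>y. indicator B y * (1 / p y) \<partial>M)"
  have Bs: "B \<in> sets borel" using calB_borel[OF B] .
  have m: "m > 0" using calB_measure_pos[OF B] by (simp add: m_def)
  have int1: "integrable M (\<lambda>y. indicator B y * (1 / p y))"
  proof (rule finite_measure.integrable_const_bound[OF finite_measure_mu, where B="1/p_minus"])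
    show "AE y in M. norm (indicator B y * (1 / p y)) \<le> 1 / p_minus"
      using AE_p_bounds by eventually_elim (use p_minus_gt_1 in \<open>auto simp: indicator_def divide_simps\<close>)
  qed (use Bs in measurable)
  have int2: "integrable M (\<lambda>y. indicator B y :: real)"
    by (rule finite_measure.integrable_const_bound[OF finite_measure_mu, where B=1]) (use Bs in \<open>auto simp: indicator_def\<close>)
  have "(\<integral>y. indicator B y * (1 / conj_exp p y) \<partial>M) = (\<integral>y. indicator B y - indicator B y * (1 / p y) \<partial>M)"
  proof (rule integral_cong_AE)
    show "AE y in M. indicator B y * (1 / conj_exp p y) = indicator B y - indicator B y * (1 / p y)"
      using AE_p_bounds by eventually_elim (use p_minus_gt_1 in \<open>auto simp: conj_exp_def indicator_def field_simps\<close>)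
  qed (use Bs in measurable)
  also have "\<dots> = m - I" unfolding I_def m_def using int1 int2 Bs by (simp add: integral_diff)
  finally have J: "(\<integral>y. indicator B y * (1 / conj_exp p y) \<partial>M) = m - I" .
  have a1: "avg_exp \<alpha> p B = m / I" by (simp add: avg_exp_def I_def m_def)
  have a2: "avg_exp \<alpha> (conj_exp p) B = m / (m - I)" unfolding avg_exp_def J m_def[symmetric] by simp
  have r: "p_minus \<le> m / I" using avg_exp_range(1)[OF B] a1 by simp
  have I0: "I \<noteq> 0" using r p_minus_gt_1 by auto
  have I1: "m - I \<noteq> 0" using r p_minus_gt_1 I0 m by auto
  show ?thesis unfolding a1 a2 using I0 I1 m by (simp add: field_simps)
qed

lemma w'_measurable[measurable]: "w' \<in> borel_measurable M" by measurable
lemma w_measurable[measurable]: "w \<in> borel_measurable M" by measurable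

lemma vnorm_w_inverse_log:
  assumes B: "B \<in> calB"
  shows "\<exists>l>0. vnorm \<alpha> (\<lambda>z. conj_exp p z / p z) (\<lambda>z. epowr (w z) (-1) * indicator B z) = ennreal l
     \<and> \<bar>ln l - (avg_exp \<alpha> p B - 1) * ln (enn2real (wmeas \<alpha> w' B))\<bar> \<le> dev_const"
proof -
  define b where "b = enn2real (wmeas \<alpha> w' B)"
  have bpos: "b > 0" using ln_wmeas_w'_lower(1)[OF B] by (simp add: b_def)
  have Bs: "B \<in> sets M" using calB_borel[OF B] by simp
  have X: "(\<integral>\<^sup>+z. w' z * indicator B z \<partial>M) = ennreal b" using wmeas_w'_calB_real[OF B] by (simp add: b_def wmeas_def)
  have AE: "AE z in M. z \<in> B \<longrightarrow> 0 < p z - 1 \<and> p z - 1 \<le> p_plus - 1 \<and> \<bar>(avg_exp \<alpha> p B - 1 - (p z - 1)) * ln b\<bar> \<le> (p_plus - 1) * (dev_const / (p_plus - 1))"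
    using AE_p_bounds
  proof eventually_elim
    fix z assume h: "z \<in> unitB \<and> p_minus \<le> p z \<and> p z \<le> p_plus"
    show "z \<in> B \<longrightarrow> 0 < p z - 1 \<and> p z - 1 \<le> p_plus - 1 \<and> \<bar>(avg_exp \<alpha> p B - 1 - (p z - 1)) * ln b\<bar> \<le> (p_plus - 1) * (dev_const / (p_plus - 1))"
    proof
      assume z: "z \<in> B"
      have "\<bar>(avg_exp \<alpha> p B - p z) * ln b\<bar> \<le> dev_const" using avg_exp_deviation_ln_le[OF B z] h abs_ln_wmeas_w'_le[OF B] by (simp add: b_def)
      then show "0 < p z - 1 \<and> p z - 1 \<le> p_plus - 1 \<and> \<bar>(avg_exp \<alpha> p B - 1 - (p z - 1)) * ln b\<bar> \<le> (p_plus - 1) * (dev_const / (p_plus - 1))"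
        using h p_minus_gt_1 p_plus_gt_1 by simp
    qed
  qed
  have eq: "(p_plus - 1) * (dev_const / (p_plus - 1)) = dev_const" using p_plus_gt_1 by simp
  show ?thesis
    using luxemburg_norm_log_bound[OF w'_measurable Bs X bpos AE p_plus_gt_1 luxemburg_integrand_w]
    unfolding vnorm_def b_def[symmetric] eq .
qed

lemma vnorm_w'_inverse_log:
  assumes B: "B \<in> calB"
  shows "\<exists>l>0. vnorm \<alpha> (\<lambda>z. conj_exp (conj_exp p) z / conj_exp p z) (\<lambda>z. epowr (w' z) (-1) * indicator B z) = ennreal l
     \<and> \<bar>ln l - (1 / (avg_exp \<alpha> p B - 1)) * ln (enn2real (wmeas \<alpha> w B))\<bar> \<le> (1 / (p_minus - 1)) * (dev_const / (p_minus - 1))"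
proof -
  define a where "a = enn2real (wmeas \<alpha> w B)"
  have apos: "a > 0" using ln_wmeas_w_lower(1)[OF B] by (simp add: a_def)
  have Bs: "B \<in> sets M" using calB_borel[OF B] by simp
  have X: "(\<integral>\<^sup>+z. w z * indicator B z \<partial>M) = ennreal a" using wmeas_w_calB_real[OF B] by (simp add: a_def wmeas_def)
  have d: "p_minus - 1 > 0" using p_minus_gt_1 by simp
  have pB: "p_minus \<le> avg_exp \<alpha> p B" using avg_exp_range(1)[OF B] .
  have AE: "AE z in M. z \<in> B \<longrightarrow> 0 < 1 / (p z - 1) \<and> 1 / (p z - 1) \<le> 1 / (p_minus - 1) \<and>
      \<bar>(1 / (avg_exp \<alpha> p B - 1) - 1 / (p z - 1)) * ln a\<bar> \<le> (1 / (p_minus - 1)) * (dev_const / (p_minus - 1))"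
    using AE_p_bounds
  proof eventually_elim
    fix z assume h: "z \<in> unitB \<and> p_minus \<le> p z \<and> p z \<le> p_plus"
    show "z \<in> B \<longrightarrow> 0 < 1 / (p z - 1) \<and> 1 / (p z - 1) \<le> 1 / (p_minus - 1) \<and>
      \<bar>(1 / (avg_exp \<alpha> p B - 1) - 1 / (p z - 1)) * ln a\<bar> \<le> (1 / (p_minus - 1)) * (dev_const / (p_minus - 1))"
    proof
      assume z: "z \<in> B"
      have Hb: "\<bar>(avg_exp \<alpha> p B - p z) * ln a\<bar> \<le> dev_const" using avg_exp_deviation_ln_le[OF B z] h abs_ln_wmeas_w_le[OF B] by (simp add: a_def)
      have D: "(p_minus - 1) * (p_minus - 1) \<le> (avg_exp \<alpha> p B - 1) * (p z - 1)"
        using pB h d by (intro mult_mono) auto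
      have Dpos: "0 < (p_minus - 1) * (p_minus - 1)" using d by simp
      have e: "(1 / (avg_exp \<alpha> p B - 1) - 1 / (p z - 1)) * ln a = - ((avg_exp \<alpha> p B - p z) * ln a) / ((avg_exp \<alpha> p B - 1) * (p z - 1))"
        using pB h d by (simp add: field_simps)
      have "\<bar>(1 / (avg_exp \<alpha> p B - 1) - 1 / (p z - 1)) * ln a\<bar> = \<bar>(avg_exp \<alpha> p B - p z) * ln a\<bar> / ((avg_exp \<alpha> p B - 1) * (p z - 1))"
        unfolding e using pB h d by (simp add: abs_divide abs_minus_cancel)
      also have "\<dots> \<le> dev_const / ((p_minus - 1) * (p_minus - 1))"
        using Hb D Dpos dev_const_nonneg by (intro frac_le) auto
      also have "\<dots> = (1 / (p_minus - 1)) * (dev_const / (p_minus - 1))" by simp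
      finally have "\<bar>(1 / (avg_exp \<alpha> p B - 1) - 1 / (p z - 1)) * ln a\<bar> \<le> (1 / (p_minus - 1)) * (dev_const / (p_minus - 1))" .
      moreover have "1 / (p z - 1) \<le> 1 / (p_minus - 1)" using h d by (intro divide_left_mono) auto
      ultimately show "0 < 1 / (p z - 1) \<and> 1 / (p z - 1) \<le> 1 / (p_minus - 1) \<and>
        \<bar>(1 / (avg_exp \<alpha> p B - 1) - 1 / (p z - 1)) * ln a\<bar> \<le> (1 / (p_minus - 1)) * (dev_const / (p_minus - 1))"
        using h d by simp
    qed
  qed
  have q2: "1 / (p_minus - 1) > 0" using d by simp
  show ?thesis unfolding vnorm_def a_def[symmetric]
    by (rule luxemburg_norm_log_bound[OF w_measurable Bs X apos AE q2 luxemburg_integrand_w'])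
qed

definition "cmp_const = dev_const + (p_plus - 1) * ((1 / (p_minus - 1)) * (dev_const / (p_minus - 1)))"

lemma cmp_const_ge: "dev_const \<le> cmp_const" "(p_plus - 1) * ((1 / (p_minus - 1)) * (dev_const / (p_minus - 1))) \<le> cmp_const" "0 \<le> cmp_const"
proof -
  have "0 \<le> (p_plus - 1) * ((1 / (p_minus - 1)) * (dev_const / (p_minus - 1)))" using p_plus_gt_1 p_minus_gt_1 dev_const_nonneg by simp
  then show "dev_const \<le> cmp_const" "(p_plus - 1) * ((1 / (p_minus - 1)) * (dev_const / (p_minus - 1))) \<le> cmp_const" "0 \<le> cmp_const"
    using dev_const_nonneg by (auto simp: cmp_const_def)
qed

lemma Bchar_eq_exp:
  assumes "measure M B > 0" "wmeas \<alpha> v B = ennreal a" "a > 0"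
    and "vnorm \<alpha> (\<lambda>z. conj_exp q z / q z) (\<lambda>z. epowr (v z) (-1) * indicator B z) = ennreal l" "l > 0"
  shows "Bchar \<alpha> q v B = ennreal (exp (- avg_exp \<alpha> q B * ln (measure M B) + ln a + ln l))"
proof -
  have "Bchar \<alpha> q v B = ennreal (measure M B powr (- avg_exp \<alpha> q B)) * ennreal a * ennreal l"
    unfolding Bchar_def assms(2,4) ..
  also have "\<dots> = ennreal (measure M B powr (- avg_exp \<alpha> q B) * a * l)"
    using assms by (simp add: ennreal_mult)
  also have "measure M B powr (- avg_exp \<alpha> q B) * a * l = exp (- avg_exp \<alpha> q B * ln (measure M B) + ln a + ln l)"
    using assms by (simp add: powr_def exp_add exp_diff exp_minus field_simps)
  finally show ?thesis .
qed

lemma Bchar_log_approx: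
  assumes B: "B \<in> calB"
  shows "\<exists>l1 l2 l3 lb L.
    epowr (Bchar \<alpha> (conj_exp p) w' B) (avg_exp \<alpha> p B - 1) = ennreal (exp l1) \<and>
    Bchar \<alpha> p w B = ennreal (exp l2) \<and>
    wmeas \<alpha> w B / emeasure M B * epowr (wmeas \<alpha> w' B / emeasure M B) (avg_exp \<alpha> p B - 1) = ennreal (exp l3) \<and>
    Bchar \<alpha> (conj_exp p) w' B = ennreal (exp lb) \<and> l1 = (avg_exp \<alpha> p B - 1) * lb \<and>
    \<bar>l1 - L\<bar> \<le> cmp_const \<and> \<bar>l2 - L\<bar> \<le> cmp_const \<and> \<bar>l3 - L\<bar> \<le> cmp_const"
proof -
  define pB where "pB = avg_exp \<alpha> p B"
  define m where "m = measure M B"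
  define a where "a = enn2real (wmeas \<alpha> w B)"
  define b where "b = enn2real (wmeas \<alpha> w' B)"
  have m: "m > 0" using calB_measure_pos[OF B] by (simp add: m_def)
  have apos: "a > 0" using ln_wmeas_w_lower(1)[OF B] by (simp add: a_def)
  have bpos: "b > 0" using ln_wmeas_w'_lower(1)[OF B] by (simp add: b_def)
  have w_B: "wmeas \<alpha> w B = ennreal a" using wmeas_w_calB_real[OF B] by (simp add: a_def)
  have bE: "wmeas \<alpha> w' B = ennreal b" using wmeas_w'_calB_real[OF B] by (simp add: b_def)
  have mE: "emeasure M B = ennreal m" by (simp add: m_def emeasure_mu_eq_measure)
  have pB: "p_minus \<le> pB" "pB \<le> p_plus" using avg_exp_range[OF B] by (auto simp: pB_def)
  have pB1: "pB - 1 > 0" using pB p_minus_gt_1 by simp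
  obtain l2 where l2: "l2 > 0" "vnorm \<alpha> (\<lambda>z. conj_exp p z / p z) (\<lambda>z. epowr (w z) (-1) * indicator B z) = ennreal l2"
    "\<bar>ln l2 - (pB - 1) * ln b\<bar> \<le> dev_const"
    using vnorm_w_inverse_log[OF B] unfolding pB_def[symmetric] b_def[symmetric] by blast
  obtain l1 where l1: "l1 > 0" "vnorm \<alpha> (\<lambda>z. conj_exp (conj_exp p) z / conj_exp p z) (\<lambda>z. epowr (w' z) (-1) * indicator B z) = ennreal l1"
    "\<bar>ln l1 - (1 / (pB - 1)) * ln a\<bar> \<le> (1 / (p_minus - 1)) * (dev_const / (p_minus - 1))"
    using vnorm_w'_inverse_log[OF B] unfolding pB_def[symmetric] a_def[symmetric] by blast
  have dual: "avg_exp \<alpha> (conj_exp p) B = pB / (pB - 1)" using avg_exp_conj_exp[OF B] by (simp add: pB_def)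
  define L where "L = - pB * ln m + ln a + (pB - 1) * ln b"
  define x2 where "x2 = - pB * ln m + ln a + ln l2"
  define xb where "xb = - (pB / (pB - 1)) * ln m + ln b + ln l1"
  define x1 where "x1 = (pB - 1) * xb"
  define x3 where "x3 = ln a - ln m + (pB - 1) * (ln b - ln m)"
  have Q2: "Bchar \<alpha> p w B = ennreal (exp x2)"
    using Bchar_eq_exp[OF calB_measure_pos[OF B] w_B apos l2(2,1)] by (simp add: x2_def pB_def m_def)
  have QB: "Bchar \<alpha> (conj_exp p) w' B = ennreal (exp xb)"
    using Bchar_eq_exp[OF calB_measure_pos[OF B] bE bpos l1(2,1)] by (simp add: xb_def dual m_def)
  have Q1: "epowr (Bchar \<alpha> (conj_exp p) w' B) (pB - 1) = ennreal (exp x1)"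
    unfolding QB x1_def by (simp add: epowr_ennreal powr_def mult.commute)
  have Q3: "wmeas \<alpha> w B / emeasure M B * epowr (wmeas \<alpha> w' B / emeasure M B) (pB - 1) = ennreal (exp x3)"
  proof -
    have "wmeas \<alpha> w B / emeasure M B = ennreal (a / m)" unfolding w_B mE using apos m by (simp add: divide_ennreal)
    moreover have "wmeas \<alpha> w' B / emeasure M B = ennreal (b / m)" unfolding bE mE using bpos m by (simp add: divide_ennreal)
    moreover have "epowr (ennreal (b / m)) (pB - 1) = ennreal ((b / m) powr (pB - 1))" using bpos m by (simp add: epowr_ennreal)
    moreover have "ennreal (a / m) * ennreal ((b / m) powr (pB - 1)) = ennreal (a / m * (b / m) powr (pB - 1))"
      by (rule ennreal_mult[symmetric]) (use apos m in auto)
    moreover have "a / m * (b / m) powr (pB - 1) = exp x3" using apos bpos m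
      by (simp add: x3_def powr_def exp_add exp_diff ln_div)
    ultimately show ?thesis by simp
  qed
  have d2: "\<bar>x2 - L\<bar> \<le> cmp_const" using l2(3) cmp_const_ge by (simp add: x2_def L_def)
  have d3: "\<bar>x3 - L\<bar> \<le> cmp_const" using cmp_const_ge by (simp add: x3_def L_def algebra_simps)
  have d1: "\<bar>x1 - L\<bar> \<le> cmp_const"
  proof -
    have "x1 - L = (pB - 1) * (ln l1 - (1 / (pB - 1)) * ln a)"
      using pB1 by (simp add: x1_def xb_def L_def field_simps)
    then have "\<bar>x1 - L\<bar> = (pB - 1) * \<bar>ln l1 - (1 / (pB - 1)) * ln a\<bar>" using pB1 by (simp add: abs_mult)
    also have "\<dots> \<le> (p_plus - 1) * ((1 / (p_minus - 1)) * (dev_const / (p_minus - 1)))"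
      using l1(3) pB pB1 by (intro mult_mono) auto
    also have "\<dots> \<le> cmp_const" by (rule cmp_const_ge)
    finally show ?thesis .
  qed
  show ?thesis
    using Q1 Q2 Q3 QB d1 d2 d3 unfolding pB_def x1_def by blast
qed

lemma weight_w': "weight \<alpha> w'"
proof -
  have "w' \<in> borel_measurable borel" by (rule borel_measurable_w')
  moreover have "(\<integral>\<^sup>+ z. w' z * indicator K z \<partial>M) < \<infinity>" if "compact K" "K \<subseteq> unitB" for K
  proof -
    have "(\<integral>\<^sup>+ z. w' z * indicator K z \<partial>M) = wmeas \<alpha> w' K" by (simp add: wmeas_def)
    also have "\<dots> \<le> wmeas \<alpha> w' unitB" by (rule wmeas_mono[OF that(2)])
    also have "\<dots> < \<infinity>" by (rule wmeas_w'_unitB_finite)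
    finally show ?thesis .
  qed
  ultimately show ?thesis unfolding weight_def by auto
qed

lemma Bchar_dual_le:
  assumes B: "B \<in> calB"
  shows "Bchar \<alpha> (conj_exp p) w' B \<le> ennreal (exp (max 0 (ln (enn2real Bchar_sup) + 2 * cmp_const) / (p_minus - 1)))"
proof -
  obtain l1 l2 l3 lb L where Q1: "epowr (Bchar \<alpha> (conj_exp p) w' B) (avg_exp \<alpha> p B - 1) = ennreal (exp l1)"
    and Q2: "Bchar \<alpha> p w B = ennreal (exp l2)"
    and QB: "Bchar \<alpha> (conj_exp p) w' B = ennreal (exp lb)" and l1: "l1 = (avg_exp \<alpha> p B - 1) * lb"
    and d: "\<bar>l1 - L\<bar> \<le> cmp_const" "\<bar>l2 - L\<bar> \<le> cmp_const"
    using Bchar_log_approx[OF B] by blast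
  have sup_real: "Bchar_sup = ennreal (enn2real Bchar_sup)" using Bchar_sup_finite by (cases Bchar_sup) auto
  have "ennreal (exp l2) \<le> ennreal (enn2real Bchar_sup)" using Bchar_le_sup[OF B] Q2 sup_real by simp
  then have e: "exp l2 \<le> enn2real Bchar_sup" by (simp add: ennreal_le_iff)
  then have "enn2real Bchar_sup > 0" using exp_gt_zero[of l2] by linarith
  then have l2le: "l2 \<le> ln (enn2real Bchar_sup)" using e by (metis ln_exp ln_le_cancel_iff exp_gt_zero)
  have l1le: "l1 \<le> ln (enn2real Bchar_sup) + 2 * cmp_const" using d l2le by (simp add: abs_le_iff)
  have pB: "p_minus \<le> avg_exp \<alpha> p B" using avg_exp_range(1)[OF B] .
  have d1: "p_minus - 1 > 0" using p_minus_gt_1 by simp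
  have "lb \<le> max 0 (ln (enn2real Bchar_sup) + 2 * cmp_const) / (p_minus - 1)"
  proof (cases "lb \<le> 0")
    case True then show ?thesis using d1 by (smt (verit) divide_nonneg_pos max.cobounded1)
  next
    case False
    have "(p_minus - 1) * lb \<le> (avg_exp \<alpha> p B - 1) * lb" using pB False by (intro mult_right_mono) auto
    also have "\<dots> = l1" by (simp add: l1)
    also have "\<dots> \<le> max 0 (ln (enn2real Bchar_sup) + 2 * cmp_const)" using l1le by simp
    finally show ?thesis using d1 by (simp add: field_simps)
  qed
  then show ?thesis unfolding QB by (intro ennreal_leI) simp
qed

lemma Bplus_dual: "Bplus \<alpha> (conj_exp p) w'"
proof -
  have "(SUP B\<in>calB. Bchar \<alpha> (conj_exp p) w' B)
      \<le> ennreal (exp (max 0 (ln (enn2real Bchar_sup) + 2 * cmp_const) / (p_minus - 1)))"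
    by (rule SUP_least) (rule Bchar_dual_le)
  also have "\<dots> < \<infinity>" by simp
  finally show ?thesis using weight_w' unfolding Bplus_def by simp
qed

lemma Bchar_comparable:
  assumes B: "B \<in> calB"
  shows "let Q1 = epowr (Bchar \<alpha> (conj_exp p) w' B) (avg_exp \<alpha> p B - 1);
           Q2 = Bchar \<alpha> p w B;
           Q3 = wmeas \<alpha> w B / emeasure M B * epowr (wmeas \<alpha> w' B / emeasure M B) (avg_exp \<alpha> p B - 1);
           C = ennreal (exp (2 * cmp_const))
       in Q1 \<le> C * Q2 \<and> Q2 \<le> C * Q1 \<and> Q1 \<le> C * Q3 \<and> Q3 \<le> C * Q1 \<and> Q2 \<le> C * Q3 \<and> Q3 \<le> C * Q2"
proof -
  obtain l1 l2 l3 lb L where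
    "epowr (Bchar \<alpha> (conj_exp p) w' B) (avg_exp \<alpha> p B - 1) = ennreal (exp l1)"
    "Bchar \<alpha> p w B = ennreal (exp l2)"
    "wmeas \<alpha> w B / emeasure M B * epowr (wmeas \<alpha> w' B / emeasure M B) (avg_exp \<alpha> p B - 1) = ennreal (exp l3)"
    "\<bar>l1 - L\<bar> \<le> cmp_const" "\<bar>l2 - L\<bar> \<le> cmp_const" "\<bar>l3 - L\<bar> \<le> cmp_const"
    using Bchar_log_approx[OF B] by blast
  then show ?thesis unfolding Let_def by (simp add: ennreal_exp_close)
qed

end

lemma Bplus_weight_exists:
  assumes "\<alpha> > 0" "Plog \<alpha> p" "Bplus \<alpha> p w" "wmeas \<alpha> w unitB > 0"
  obtains p_minus p_plus c where "Bplus_weight \<alpha> p w p_minus p_plus c"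
proof -
  obtain p_minus p_plus c where "1 < p_minus" "AE z in mu_alpha \<alpha>. p_minus \<le> p z"
    "\<And>z. z \<in> unitB \<Longrightarrow> p z \<le> p_plus" "p_minus \<le> p_plus" "c \<ge> 0"
    "\<And>z y. z \<in> unitB \<Longrightarrow> y \<in> unitB \<Longrightarrow> z \<noteq> y \<Longrightarrow> \<bar>p z - p y\<bar> \<le> c / ln (exp 1 + 1 / pdist z y)"
    using Plog_bounds[OF assms(2)] by blast
  then show ?thesis
    using assms by (intro that[of p_minus p_plus c]) (unfold_locales, auto simp: Plog_def)
qed

theorem propositionp1:
  fixes \<alpha> :: real and p :: "('n::finite) cvec \<Rightarrow> real" and w :: "'n cvec \<Rightarrow> ennreal"
  assumes "\<alpha> > 0"
    and "Plog \<alpha> p"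
    and "Bplus \<alpha> p w"
    and "wmeas \<alpha> w unitB > 0"
  shows "Bplus \<alpha> (conj_exp p) (dual_weight p w) \<and>
    (\<exists>C::real. C \<ge> 1 \<and> (\<forall>B\<in>calB.
      (let Q1 = epowr (Bchar \<alpha> (conj_exp p) (dual_weight p w) B) (avg_exp \<alpha> p B - 1);
           Q2 = Bchar \<alpha> p w B;
           Q3 = wmeas \<alpha> w B / emeasure (mu_alpha \<alpha>) B *
                epowr (wmeas \<alpha> (dual_weight p w) B / emeasure (mu_alpha \<alpha>) B) (avg_exp \<alpha> p B - 1)
       in Q1 \<le> ennreal C * Q2 \<and> Q2 \<le> ennreal C * Q1 \<and>
          Q1 \<le> ennreal C * Q3 \<and> Q3 \<le> ennreal C * Q1 \<and>
          Q2 \<le> ennreal C * Q3 \<and> Q3 \<le> ennreal C * Q2)))"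
proof -
  obtain p_minus p_plus c where "Bplus_weight \<alpha> p w p_minus p_plus c"
    using Bplus_weight_exists[OF assms] .
  then interpret Bplus_weight \<alpha> p w p_minus p_plus c .
  show ?thesis
    using Bplus_dual Bchar_comparable cmp_const_ge(3) unfolding Let_def
    by (intro conjI exI[of _ "exp (2 * cmp_const)"]) auto
qed

end
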